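(* There is a deterministic single-tape Turing machine $\mathcal{M}_{\mathrm{SS}}$ with a fixed finite set of states and a fixed finite tape alphabet such that for every input string $w$ of length $n$ of the form \[ w = S\_@\_a_1\_a_2\_\cdots\_a_k\_\#\, b_1\_b_2\_\cdots\_b_m\_; \] where $S,a_1,\dots,a_k,b_1,\dots,b_m$ are nonnegative integers written in decimal: (i) $\mathcal{M}_{\mathrm{SS}}$ accepts $w$ if and only if the certificate $b_1,\dots,b_m$ encodes a valid subset of the input list whose sum equals the target, i.e. there are pairwise distinct indices $i_1,\dots,i_m\in\{1,\dots,k\}$ with $b_j=a_{i_j}$ for all $j$ and $\sum_{j=1}^m b_j=S$; and (ii) $\mathcal{M}_{\mathrm{SS}}$ halts in $O(n^2)$ time and uses $O(n)$ tape space. Hence \textsc{Subset-Sum} admits a deterministic quadratic-time and linear-space verifier.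
   Context: The input occupies tape cells $0,\dots,n-1$, the head starts at cell $0$, and all other cells are blank (the tape is infinite in both directions). The symbol $\_$ is a (non-blank) number delimiter, $@$ separates the target $S$ from the list $a_1,\dots,a_k$, $\#$ separates the list from the certificate, and $;$ terminates the certificate. The list $a_1,\dots,a_k$ may contain repeated values (it is treated as a multiset; equal values at different positions are distinct elements). *)

theory Defs
  imports Main
begin

text \<open>States are the naturals below tm_nstates, tape symbols the naturals below
tm_nsyms. Symbol 0 is the blank. Moves are -1 (left), 0 (stay), 1 (right).\<close>

record tm =
  tm_nstates :: nat
  tm_nsyms   :: nat
  tm_delta   :: "nat \<Rightarrow> nat \<Rightarrow> nat \<times> nat \<times> int"
  tm_start   :: nat
  tm_accept  :: nat
  tm_reject  :: nat

definition blank_sym :: nat where "blank_sym = 0"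
definition digit_sym :: "nat \<Rightarrow> nat" where "digit_sym d = d + 1"
definition us_sym :: nat where "us_sym = 11"
definition at_sym :: nat where "at_sym = 12"
definition hash_sym :: nat where "hash_sym = 13"
definition semi_sym :: nat where "semi_sym = 14"

definition wf_tm :: "tm \<Rightarrow> bool" where
  "wf_tm M \<longleftrightarrow>
     15 \<le> tm_nsyms M \<and>
     tm_start M < tm_nstates M \<and> tm_accept M < tm_nstates M \<and> tm_reject M < tm_nstates M \<and>
     tm_accept M \<noteq> tm_reject M \<and>
     (\<forall>q < tm_nstates M. \<forall>s < tm_nsyms M.
        (case tm_delta M q s of (q', s', d) \<Rightarrow>
           q' < tm_nstates M \<and> s' < tm_nsyms M \<and> d \<in> {-1, 0, 1}))"

type_synonym config = "nat \<times> (int \<Rightarrow> nat) \<times> int"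

definition halted :: "tm \<Rightarrow> config \<Rightarrow> bool" where
  "halted M c \<longleftrightarrow> fst c = tm_accept M \<or> fst c = tm_reject M"

definition tm_step :: "tm \<Rightarrow> config \<Rightarrow> config" where
  "tm_step M c = (case c of (q, tp, h) \<Rightarrow>
     if halted M c then c
     else (case tm_delta M q (tp h) of (q', s', d) \<Rightarrow> (q', tp(h := s'), h + d)))"

definition initial_config :: "tm \<Rightarrow> nat list \<Rightarrow> config" where
  "initial_config M w =
     (tm_start M, (\<lambda>i. if 0 \<le> i \<and> i < int (length w) then w ! nat i else blank_sym), 0)"

definition tm_run :: "tm \<Rightarrow> nat list \<Rightarrow> nat \<Rightarrow> config" where
  "tm_run M w t = (tm_step M ^^ t) (initial_config M w)"

definition halts_at :: "tm \<Rightarrow> nat list \<Rightarrow> nat \<Rightarrow> bool" where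
  "halts_at M w t \<longleftrightarrow> halted M (tm_run M w t) \<and> (\<forall>t' < t. \<not> halted M (tm_run M w t'))"

definition space_used :: "tm \<Rightarrow> nat list \<Rightarrow> nat \<Rightarrow> nat" where
  "space_used M w t = card ((\<lambda>t'. snd (snd (tm_run M w t'))) ` {..t})"

fun decimal_digits :: "nat \<Rightarrow> nat list" where
  "decimal_digits n = (if n < 10 then [n] else decimal_digits (n div 10) @ [n mod 10])"

definition enc_num :: "nat \<Rightarrow> nat list" where
  "enc_num n = map digit_sym (decimal_digits n)"

definition ss_input :: "nat \<Rightarrow> nat list \<Rightarrow> nat list \<Rightarrow> nat list" where
  "ss_input S as bs =
     enc_num S @ [us_sym, at_sym, us_sym] @
     concat (map (\<lambda>a. enc_num a @ [us_sym]) as) @ [hash_sym] @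
     concat (map (\<lambda>b. enc_num b @ [us_sym]) bs) @ [semi_sym]"

definition valid_certificate :: "nat \<Rightarrow> nat list \<Rightarrow> nat list \<Rightarrow> bool" where
  "valid_certificate S as bs \<longleftrightarrow>
     (\<exists>f :: nat \<Rightarrow> nat. inj_on f {..<length bs} \<and>
        (\<forall>j < length bs. f j < length as \<and> bs ! j = as ! f j) \<and>
        sum_list bs = S)"

end

theory Submission
  imports Defs "HOL-Library.Sublist"
begin

text \<open>The verifier processes the certificate numbers one by one, each from its last digit to its
  first. A digit \<open>d\<close> at decimal position \<open>p\<close> is subtracted, with borrowing, from the target at
  position \<open>p\<close>, and compared with the digit at position \<open>p\<close> of every list number; the list numbers
  that differ are flagged. When the certificate number is exhausted, the first unused list number
  that has matched all of its digits is marked as used, and the machine rejects if there is none: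
  equal list numbers are interchangeable, so this greedy choice loses nothing. At the end it accepts
  iff the target has become zero. Each of the \<open>O(n)\<close> rounds consists of a bounded number of sweeps
  over the input, which gives time \<open>O(n\<^sup>2)\<close>, and the head never leaves the input except for the
  cell to its left, which gives space \<open>O(n)\<close>.\<close>

section \<open>Running a Turing machine inside a window of the tape\<close>

definition tape_of :: "nat list \<Rightarrow> int \<Rightarrow> nat" where
  "tape_of T i = (if 0 \<le> i \<and> i < int (length T) then T ! nat i else blank_sym)"

lemma initial_config_tape_of: "initial_config M w = (tm_start M, tape_of w, 0)"
  by (simp add: initial_config_def tape_of_def fun_eq_iff)

lemma tape_of_nth: "tape_of (pre @ x # suf) (int (length pre)) = x"
  by (simp add: tape_of_def)

lemma tape_of_update:
  "(tape_of (pre @ x # suf))(int (length pre) := s) = tape_of (pre @ s # suf)"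
  by (auto simp: tape_of_def fun_eq_iff nth_append nth_Cons' nat_diff_distrib' nat_eq_iff)

lemma tape_of_left_end: "tape_of T (-1) = blank_sym"
  by (simp add: tape_of_def)

lemma tm_step_active:
  "q \<noteq> tm_accept M \<Longrightarrow> q \<noteq> tm_reject M \<Longrightarrow>
   tm_step M (q, tp, h) = (case tm_delta M q (tp h) of (q', s', d) \<Rightarrow> (q', tp(h := s'), h + d))"
  by (simp add: tm_step_def halted_def)

lemma funpow_tm_step_halted: "halted M c \<Longrightarrow> (tm_step M ^^ i) c = c"
  by (induction i) (auto simp: tm_step_def split: prod.splits)

text \<open>The window includes cell \<open>-1\<close> because sweeps over the target end on the blank left of
  the input.\<close>

definition reaches :: "tm \<Rightarrow> nat \<Rightarrow> config \<Rightarrow> nat \<Rightarrow> config \<Rightarrow> bool" where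
  "reaches M N c k c' \<longleftrightarrow> (tm_step M ^^ k) c = c' \<and>
     (\<forall>i\<le>k. snd (snd ((tm_step M ^^ i) c)) \<in> {-1..int N})"

lemma reaches_refl: "snd (snd c) \<in> {-1..int N} \<Longrightarrow> reaches M N c 0 c"
  by (simp add: reaches_def)

lemma reaches_trans:
  assumes "reaches M N c k1 c1" "reaches M N c1 k2 c2"
  shows "reaches M N c (k1 + k2) c2"
  unfolding reaches_def
proof (intro conjI allI impI)
  have c1: "(tm_step M ^^ k1) c = c1" and c2: "(tm_step M ^^ k2) c1 = c2"
    using assms by (auto simp: reaches_def)
  then have "(tm_step M ^^ (k2 + k1)) c = c2"
    by (simp add: funpow_add)
  then show "(tm_step M ^^ (k1 + k2)) c = c2"
    by (simp add: add.commute)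
  fix i assume "i \<le> k1 + k2"
  show "snd (snd ((tm_step M ^^ i) c)) \<in> {-1..int N}"
  proof (cases "i \<le> k1")
    case True
    then show ?thesis using assms(1) by (simp add: reaches_def)
  next
    case False
    then have "(tm_step M ^^ i) c = (tm_step M ^^ (i - k1)) c1" "i - k1 \<le> k2"
      using \<open>i \<le> k1 + k2\<close> c1 funpow_add[of "i - k1" k1 "tm_step M"] by auto
    then show ?thesis using assms(2) by (simp add: reaches_def)
  qed
qed

lemma reaches_eq: "reaches M N c k c' \<Longrightarrow> k = k' \<Longrightarrow> c' = c'' \<Longrightarrow> reaches M N c k' c''"
  by simp

lemma reaches_step:
  assumes "q \<noteq> tm_accept M" "q \<noteq> tm_reject M" "tm_delta M q x = (q', s, dir)"
    and "T = pre @ x # suf" "T' = pre @ s # suf" "length T \<le> N"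
    and "h = int (length pre)" "h' = h + dir" "h' \<in> {-1..int N}"
  shows "reaches M N (q, tape_of T, h) 1 (q', tape_of T', h')"
  using assms by (auto simp: reaches_def le_Suc_eq tm_step_active tape_of_nth tape_of_update)

lemma reaches_step_left_end:
  assumes "q \<noteq> tm_accept M" "q \<noteq> tm_reject M" "tm_delta M q blank_sym = (q', blank_sym, dir)"
    and "h = -1" "h' = dir - 1" "h' \<in> {-1..int N}"
  shows "reaches M N (q, tape_of T, h) 1 (q', tape_of T, h')"
proof -
  have "(tape_of T)(-1 := blank_sym) = tape_of T" by (auto simp: tape_of_def)
  then show ?thesis
    using assms by (auto simp: reaches_def le_Suc_eq tm_step_active tape_of_left_end)
qed

lemma reaches_sweep_right:
  assumes "q \<noteq> tm_accept M" "q \<noteq> tm_reject M" "\<forall>x\<in>set xs. tm_delta M q x = (q, f x, 1)"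
    and "T = pre @ xs @ suf" "T' = pre @ map f xs @ suf" "length T \<le> N"
    and "h = int (length pre)" "h' = h + int (length xs)" "k = length xs"
  shows "reaches M N (q, tape_of T, h) k (q, tape_of T', h')"
  using assms
proof (induction xs arbitrary: pre T h k)
  case Nil
  then show ?case by (auto intro: reaches_refl)
next
  case (Cons x xs)
  have "reaches M N (q, tape_of T, h) 1 (q, tape_of (pre @ f x # xs @ suf), h + 1)"
    by (rule reaches_step) (use Cons.prems in auto)
  moreover have "reaches M N (q, tape_of (pre @ f x # xs @ suf), h + 1) (length xs) (q, tape_of T', h')"
    by (rule Cons.IH[where pre = "pre @ [f x]"]) (use Cons.prems in auto)
  ultimately show ?case using reaches_trans Cons.prems(9) by fastforce
qed

lemma reaches_sweep_left:
  assumes "q \<noteq> tm_accept M" "q \<noteq> tm_reject M" "\<forall>x\<in>set xs. tm_delta M q x = (q, f x, -1)"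
    and "T = pre @ xs @ suf" "T' = pre @ map f xs @ suf" "length T \<le> N"
    and "h = int (length pre + length xs) - 1" "h' = int (length pre) - 1" "k = length xs"
  shows "reaches M N (q, tape_of T, h) k (q, tape_of T', h')"
  using assms
proof (induction xs arbitrary: suf T h k rule: rev_induct)
  case Nil
  then show ?case by (auto intro: reaches_refl)
next
  case (snoc x xs)
  have "reaches M N (q, tape_of T, h) 1 (q, tape_of (pre @ xs @ f x # suf), h - 1)"
    by (rule reaches_step[where pre = "pre @ xs"]) (use snoc.prems in auto)
  moreover have "reaches M N (q, tape_of (pre @ xs @ f x # suf), h - 1) (length xs) (q, tape_of T', h')"
    by (rule snoc.IH[where suf = "f x # suf"]) (use snoc.prems in auto)
  ultimately show ?case using reaches_trans snoc.prems(9) by fastforce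
qed

lemma halts_at_of_reaches:
  assumes "reaches M N (initial_config M w) k c" "halted M c"
  obtains t where "halts_at M w t" "t \<le> k" "tm_run M w t = c" "space_used M w t \<le> N + 2"
proof -
  have run_k: "tm_run M w k = c" and window: "\<And>i. i \<le> k \<Longrightarrow> snd (snd (tm_run M w i)) \<in> {-1..int N}"
    using assms(1) by (auto simp: reaches_def tm_run_def)
  define t where "t = (LEAST t. halted M (tm_run M w t))"
  have halted_t: "halted M (tm_run M w t)" and "t \<le> k"
    using assms(2) run_k unfolding t_def by (auto intro: LeastI Least_le)
  have "\<forall>t' < t. \<not> halted M (tm_run M w t')"
    unfolding t_def using not_less_Least by blast
  then have "halts_at M w t" using halted_t by (simp add: halts_at_def)
  moreover have "tm_run M w t = c"
  proof -
    have "tm_run M w k = (tm_step M ^^ (k - t)) (tm_run M w t)"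
      using \<open>t \<le> k\<close> funpow_add[of "k - t" t "tm_step M"] by (simp add: tm_run_def)
    then show ?thesis using run_k funpow_tm_step_halted[OF halted_t] by simp
  qed
  moreover have "space_used M w t \<le> card {-1..int N}"
    unfolding space_used_def using window \<open>t \<le> k\<close> by (intro card_mono) auto
  ultimately show ?thesis using that \<open>t \<le> k\<close> by simp
qed

section \<open>Decimal digit lists\<close>

definition digit_list :: "nat list \<Rightarrow> bool" where
  "digit_list xs \<longleftrightarrow> (\<forall>x\<in>set xs. x < 10)"

lemma digit_list_simps [simp]:
  "digit_list []" "digit_list (x # xs) \<longleftrightarrow> x < 10 \<and> digit_list xs"
  "digit_list (xs @ ys) \<longleftrightarrow> digit_list xs \<and> digit_list ys"
  by (auto simp: digit_list_def)

definition decimal_value :: "nat list \<Rightarrow> nat" where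
  "decimal_value xs = foldl (\<lambda>a x. 10 * a + x) 0 xs"

lemma decimal_value_Nil [simp]: "decimal_value [] = 0"
  by (simp add: decimal_value_def)

lemma decimal_value_singleton [simp]: "decimal_value [x] = x"
  by (simp add: decimal_value_def)

lemma decimal_value_snoc [simp]: "decimal_value (xs @ [x]) = 10 * decimal_value xs + x"
  by (simp add: decimal_value_def)

lemma decimal_value_append:
  "decimal_value (xs @ ys) = decimal_value xs * 10 ^ length ys + decimal_value ys"
  by (induction ys rule: rev_induct) (simp_all flip: append_assoc add: algebra_simps)

lemma decimal_value_Cons: "decimal_value (x # xs) = x * 10 ^ length xs + decimal_value xs"
  using decimal_value_append[of "[x]" xs] by (simp add: decimal_value_def)

lemma decimal_value_less: "digit_list xs \<Longrightarrow> decimal_value xs < 10 ^ length xs"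
  by (induction xs rule: rev_induct) auto

declare decimal_digits.simps [simp del]

lemma decimal_value_decimal_digits [simp]: "decimal_value (decimal_digits n) = n"
  by (induction n rule: decimal_digits.induct) (subst decimal_digits.simps, simp)

lemma digit_list_decimal_digits [simp]: "digit_list (decimal_digits n)"
  by (induction n rule: decimal_digits.induct) (subst decimal_digits.simps, auto)

lemma decimal_digits_not_Nil [simp]: "decimal_digits n \<noteq> []"
  by (subst decimal_digits.simps) auto

lemma decimal_digits_inject [simp]: "decimal_digits a = decimal_digits b \<longleftrightarrow> a = b"
  by (metis decimal_value_decimal_digits)

lemma less_power_length_decimal_digits: "n < 10 ^ length (decimal_digits n)"
  using decimal_value_less[OF digit_list_decimal_digits, of n] by simp

lemma power_length_decimal_digits_le:
  assumes "2 \<le> length (decimal_digits n)"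
  shows "10 ^ (length (decimal_digits n) - 1) \<le> n"
  using assms
proof (induction n rule: decimal_digits.induct)
  case (1 n)
  have "\<not> n < 10"
    using "1.prems" by (subst (asm) decimal_digits.simps) (auto split: if_splits)
  then have split: "decimal_digits n = decimal_digits (n div 10) @ [n mod 10]"
    by (subst decimal_digits.simps) simp
  have "10 ^ (length (decimal_digits n) - 1) = 10 * 10 ^ (length (decimal_digits (n div 10)) - 1)"
    using split decimal_digits_not_Nil[of "n div 10"]
    by (cases "length (decimal_digits (n div 10))") auto
  also have "\<dots> \<le> 10 * (n div 10)"
  proof (cases "2 \<le> length (decimal_digits (n div 10))")
    case True
    then show ?thesis using "1.IH" \<open>\<not> n < 10\<close> by simp
  next
    case False
    then have "length (decimal_digits (n div 10)) - 1 = 0"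
      by simp
    then show ?thesis using \<open>\<not> n < 10\<close> by simp
  qed
  also have "\<dots> \<le> n" by simp
  finally show ?case .
qed

section \<open>The verifier\<close>

text \<open>Besides the input symbols the machine uses marked digits (a digit that has already been
  subtracted from \<open>S\<close> or matched against the current certificate number), and three rewritten
  delimiters: a list number that failed to match the current certificate number, a list number
  already used by the certificate, and a certificate number that has been fully processed.\<close>

definition marked_sym :: "nat \<Rightarrow> nat" where "marked_sym d = d + 15"
definition mismatch_sym :: nat where "mismatch_sym = 25"
definition used_sym :: nat where "used_sym = 26"
definition done_sym :: nat where "done_sym = 27"

abbreviation digit_syms :: "nat set" where "digit_syms \<equiv> {1..10}"
abbreviation marked_syms :: "nat set" where "marked_syms \<equiv> {15..24}"

lemmas sym_defs = blank_sym_def digit_sym_def us_sym_def at_sym_def hash_sym_def semi_sym_def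
  marked_sym_def mismatch_sym_def used_sym_def done_sym_def

lemma delimiter_syms_distinct [simp]:
  "blank_sym \<noteq> us_sym" "blank_sym \<noteq> at_sym" "blank_sym \<noteq> hash_sym"
  "blank_sym \<noteq> semi_sym" "blank_sym \<noteq> mismatch_sym" "blank_sym \<noteq> used_sym"
  "blank_sym \<noteq> done_sym" "us_sym \<noteq> blank_sym" "us_sym \<noteq> at_sym"
  "us_sym \<noteq> hash_sym" "us_sym \<noteq> semi_sym" "us_sym \<noteq> mismatch_sym"
  "us_sym \<noteq> used_sym" "us_sym \<noteq> done_sym" "at_sym \<noteq> blank_sym"
  "at_sym \<noteq> us_sym" "at_sym \<noteq> hash_sym" "at_sym \<noteq> semi_sym"
  "at_sym \<noteq> mismatch_sym" "at_sym \<noteq> used_sym" "at_sym \<noteq> done_sym"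
  "hash_sym \<noteq> blank_sym" "hash_sym \<noteq> us_sym" "hash_sym \<noteq> at_sym"
  "hash_sym \<noteq> semi_sym" "hash_sym \<noteq> mismatch_sym" "hash_sym \<noteq> used_sym"
  "hash_sym \<noteq> done_sym" "semi_sym \<noteq> blank_sym" "semi_sym \<noteq> us_sym"
  "semi_sym \<noteq> at_sym" "semi_sym \<noteq> hash_sym" "semi_sym \<noteq> mismatch_sym"
  "semi_sym \<noteq> used_sym" "semi_sym \<noteq> done_sym" "mismatch_sym \<noteq> blank_sym"
  "mismatch_sym \<noteq> us_sym" "mismatch_sym \<noteq> at_sym"
  "mismatch_sym \<noteq> hash_sym" "mismatch_sym \<noteq> semi_sym"
  "mismatch_sym \<noteq> used_sym" "mismatch_sym \<noteq> done_sym"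
  "used_sym \<noteq> blank_sym" "used_sym \<noteq> us_sym" "used_sym \<noteq> at_sym"
  "used_sym \<noteq> hash_sym" "used_sym \<noteq> semi_sym" "used_sym \<noteq> mismatch_sym"
  "used_sym \<noteq> done_sym" "done_sym \<noteq> blank_sym" "done_sym \<noteq> us_sym"
  "done_sym \<noteq> at_sym" "done_sym \<noteq> hash_sym" "done_sym \<noteq> semi_sym"
  "done_sym \<noteq> mismatch_sym" "done_sym \<noteq> used_sym"
  by (simp_all add: sym_defs)

definition start_st :: nat where "start_st = 0"
definition seek_st :: nat where "seek_st = 1"
definition fetch_st :: nat where "fetch_st = 2"
definition close_st :: nat where "close_st = 3"
definition rewind_st :: nat where "rewind_st = 4"
definition unmark_st :: nat where "unmark_st = 5"
definition forward_st :: nat where "forward_st = 6"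
definition enter_st :: nat where "enter_st = 7"
definition final_rewind_st :: nat where "final_rewind_st = 8"
definition final_enter_st :: nat where "final_enter_st = 9"
definition zero_test_st :: nat where "zero_test_st = 10"
definition accept_st :: nat where "accept_st = 11"
definition reject_st :: nat where "reject_st = 12"
definition select_st :: "bool \<Rightarrow> bool \<Rightarrow> nat" where
  "select_st found fresh = 13 + (if found then 2 else 0) + (if fresh then 1 else 0)"
definition to_sum_st :: "nat \<Rightarrow> nat" where "to_sum_st d = 20 + d"
definition subtract_st :: "nat \<Rightarrow> nat" where "subtract_st d = 30 + d"
definition borrow_st :: "nat \<Rightarrow> nat" where "borrow_st d = 40 + d"
definition return_st :: "nat \<Rightarrow> nat" where "return_st d = 50 + d"
definition skip_st :: "nat \<Rightarrow> nat" where "skip_st d = 60 + d"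
definition match_st :: "nat \<Rightarrow> nat" where "match_st d = 70 + d"
definition compare_st :: "nat \<Rightarrow> nat" where "compare_st d = 80 + d"
definition matched_st :: "nat \<Rightarrow> nat" where "matched_st d = 90 + d"
definition mismatched_st :: "nat \<Rightarrow> nat" where "mismatched_st d = 100 + d"

lemmas state_defs = start_st_def seek_st_def fetch_st_def close_st_def rewind_st_def unmark_st_def
  forward_st_def enter_st_def final_rewind_st_def final_enter_st_def zero_test_st_def accept_st_def
  reject_st_def select_st_def to_sum_st_def subtract_st_def borrow_st_def return_st_def skip_st_def
  match_st_def compare_st_def matched_st_def mismatched_st_def

text \<open>In \<open>select_st found fresh\<close>, \<open>found\<close> records that a list number has been selected in this
  sweep and \<open>fresh\<close> that no unmatched digit has been seen in the current list number.\<close>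

definition select_delta :: "bool \<Rightarrow> bool \<Rightarrow> nat \<Rightarrow> nat \<times> nat \<times> int" where
  "select_delta found fresh s =
    (if s \<in> digit_syms then (select_st found False, s, 1)
     else if s \<in> marked_syms then (select_st found fresh, s - 14, 1)
     else if s = us_sym then
       (if \<not> found \<and> fresh then (select_st True True, used_sym, 1) else (select_st found True, s, 1))
     else if s = mismatch_sym then (select_st found True, us_sym, 1)
     else if s = used_sym then (select_st found True, s, 1)
     else if s = hash_sym \<and> found then (seek_st, s, 1)
     else (reject_st, s, 0))"

definition digit_delta :: "nat \<Rightarrow> nat \<Rightarrow> nat \<Rightarrow> nat \<times> nat \<times> int" where
  "digit_delta d q s =
    (if q = to_sum_st d then (if s = at_sym then (subtract_st d, s, -1) else (to_sum_st d, s, -1))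
     else if q = subtract_st d then
       (if s \<in> digit_syms then
          (if d \<le> s - 1 then (return_st d, marked_sym (s - 1 - d), 1)
           else (borrow_st d, marked_sym (s - 1 + 10 - d), -1))
        else if s = blank_sym then (reject_st, s, 0) else (subtract_st d, s, -1))
     else if q = borrow_st d then
       (if s = digit_sym 0 then (borrow_st d, digit_sym 9, -1)
        else if s \<in> digit_syms then (return_st d, s - 1, 1) else (reject_st, s, 0))
     else if q = return_st d then (if s = at_sym then (skip_st d, s, 1) else (return_st d, s, 1))
     else if q = skip_st d then (match_st d, s, 1)
     else if q = match_st d then
       (if s \<in> digit_syms then (match_st d, s, 1)
        else if s = hash_sym then (seek_st, s, 1) else (compare_st d, s, -1))
     else if q = compare_st d then
       (if s = digit_sym d then (matched_st d, marked_sym d, 1) else (mismatched_st d, s, 1))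
     else if q = matched_st d then
       (if s \<in> marked_syms then (matched_st d, s, 1) else (match_st d, s, 1))
     else if s \<in> marked_syms then (mismatched_st d, s, 1)
     else if s = us_sym then (match_st d, mismatch_sym, 1)
     else (match_st d, s, 1))"

definition ss_delta :: "nat \<Rightarrow> nat \<Rightarrow> nat \<times> nat \<times> int" where
  "ss_delta q s =
    (if q = start_st then (if s = hash_sym then (seek_st, s, 1) else (start_st, s, 1))
     else if q = seek_st then
       (if s = us_sym then (fetch_st, s, -1)
        else if s = semi_sym then (final_rewind_st, s, -1) else (seek_st, s, 1))
     else if q = fetch_st then
       (if s \<in> marked_syms then (fetch_st, s, -1)
        else if s \<in> digit_syms then (to_sum_st (s - 1), marked_sym (s - 1), -1)
        else (close_st, s, 1))
     else if q = close_st then (if s = us_sym then (rewind_st, done_sym, -1) else (close_st, s, 1))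
     else if q = rewind_st then (if s = at_sym then (unmark_st, s, -1) else (rewind_st, s, -1))
     else if q = unmark_st then
       (if s = blank_sym then (forward_st, s, 1)
        else if s \<in> marked_syms then (unmark_st, s - 14, -1) else (unmark_st, s, -1))
     else if q = forward_st then (if s = at_sym then (enter_st, s, 1) else (forward_st, s, 1))
     else if q = enter_st then (select_st False True, s, 1)
     else if q = final_rewind_st then
       (if s = at_sym then (final_enter_st, s, -1) else (final_rewind_st, s, -1))
     else if q = final_enter_st then (zero_test_st, s, -1)
     else if q = zero_test_st then
       (if s = digit_sym 0 then (zero_test_st, s, -1)
        else if s = blank_sym then (accept_st, s, 0) else (reject_st, s, 0))
     else if 13 \<le> q \<and> q < 17 then select_delta (15 \<le> q) (even q) s
     else if 20 \<le> q \<and> q < 110 then digit_delta (q mod 10) q s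
     else (reject_st, s, 0))"

definition ss_verifier :: tm where
  "ss_verifier = \<lparr>tm_nstates = 110, tm_nsyms = 28, tm_delta = ss_delta, tm_start = start_st,
     tm_accept = accept_st, tm_reject = reject_st\<rparr>"

lemma ss_delta_start:
  "ss_delta start_st s = (if s = hash_sym then (seek_st, s, 1) else (start_st, s, 1))"
  by (simp add: ss_delta_def)

lemma ss_delta_seek:
  "ss_delta seek_st s = (if s = us_sym then (fetch_st, s, -1)
     else if s = semi_sym then (final_rewind_st, s, -1) else (seek_st, s, 1))"
  by (simp add: ss_delta_def state_defs)

lemma ss_delta_fetch:
  "ss_delta fetch_st s = (if s \<in> marked_syms then (fetch_st, s, -1)
     else if s \<in> digit_syms then (to_sum_st (s - 1), marked_sym (s - 1), -1) else (close_st, s, 1))"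
  by (simp add: ss_delta_def state_defs)

lemma ss_delta_close:
  "ss_delta close_st s = (if s = us_sym then (rewind_st, done_sym, -1) else (close_st, s, 1))"
  by (simp add: ss_delta_def state_defs)

lemma ss_delta_rewind:
  "ss_delta rewind_st s = (if s = at_sym then (unmark_st, s, -1) else (rewind_st, s, -1))"
  by (simp add: ss_delta_def state_defs)

lemma ss_delta_unmark:
  "ss_delta unmark_st s = (if s = blank_sym then (forward_st, s, 1)
     else if s \<in> marked_syms then (unmark_st, s - 14, -1) else (unmark_st, s, -1))"
  by (simp add: ss_delta_def state_defs)

lemma ss_delta_forward:
  "ss_delta forward_st s = (if s = at_sym then (enter_st, s, 1) else (forward_st, s, 1))"
  by (simp add: ss_delta_def state_defs)

lemma ss_delta_enter: "ss_delta enter_st s = (select_st False True, s, 1)"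
  by (simp add: ss_delta_def state_defs)

lemma ss_delta_final_rewind:
  "ss_delta final_rewind_st s =
     (if s = at_sym then (final_enter_st, s, -1) else (final_rewind_st, s, -1))"
  by (simp add: ss_delta_def state_defs)

lemma ss_delta_final_enter: "ss_delta final_enter_st s = (zero_test_st, s, -1)"
  by (simp add: ss_delta_def state_defs)

lemma ss_delta_zero_test:
  "ss_delta zero_test_st s = (if s = digit_sym 0 then (zero_test_st, s, -1)
     else if s = blank_sym then (accept_st, s, 0) else (reject_st, s, 0))"
  by (simp add: ss_delta_def state_defs)

lemma select_st_inject [simp]: "select_st f a = select_st f' a' \<longleftrightarrow> f = f' \<and> a = a'"
  by (simp add: select_st_def split: if_splits)

lemma ss_delta_halting: "q \<in> {accept_st, reject_st} \<Longrightarrow> ss_delta q s = (reject_st, s, 0)"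
  unfolding ss_delta_def by (auto simp only: state_defs) simp_all

lemma ss_delta_select: "ss_delta (select_st found fresh) s = select_delta found fresh s"
  by (cases found; cases fresh) (simp_all add: ss_delta_def state_defs)

lemma ss_delta_digit_state:
  assumes "d < 10" "q \<in> {to_sum_st d, subtract_st d, borrow_st d, return_st d, skip_st d,
    match_st d, compare_st d, matched_st d, mismatched_st d}"
  shows "ss_delta q s = digit_delta d q s"
proof -
  have "20 \<le> q" "q < 110" "q mod 10 = d"
    using assms by (auto simp: state_defs mod_add_left_eq[symmetric])
  then show ?thesis
    by (simp add: ss_delta_def state_defs)
qed

lemma ss_delta_to_sum:
  "d < 10 \<Longrightarrow> ss_delta (to_sum_st d) s =
     (if s = at_sym then (subtract_st d, s, -1) else (to_sum_st d, s, -1))"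
  by (simp add: ss_delta_digit_state digit_delta_def)

lemma ss_delta_subtract:
  "d < 10 \<Longrightarrow> ss_delta (subtract_st d) s =
     (if s \<in> digit_syms then
        (if d \<le> s - 1 then (return_st d, marked_sym (s - 1 - d), 1)
         else (borrow_st d, marked_sym (s - 1 + 10 - d), -1))
      else if s = blank_sym then (reject_st, s, 0) else (subtract_st d, s, -1))"
  by (simp add: ss_delta_digit_state digit_delta_def state_defs)

lemma ss_delta_borrow:
  "d < 10 \<Longrightarrow> ss_delta (borrow_st d) s =
     (if s = digit_sym 0 then (borrow_st d, digit_sym 9, -1)
      else if s \<in> digit_syms then (return_st d, s - 1, 1) else (reject_st, s, 0))"
  by (simp add: ss_delta_digit_state digit_delta_def state_defs)

lemma ss_delta_return:
  "d < 10 \<Longrightarrow> ss_delta (return_st d) s =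
     (if s = at_sym then (skip_st d, s, 1) else (return_st d, s, 1))"
  by (simp add: ss_delta_digit_state digit_delta_def state_defs)

lemma ss_delta_skip: "d < 10 \<Longrightarrow> ss_delta (skip_st d) s = (match_st d, s, 1)"
  by (simp add: ss_delta_digit_state digit_delta_def state_defs)

lemma ss_delta_match:
  "d < 10 \<Longrightarrow> ss_delta (match_st d) s =
     (if s \<in> digit_syms then (match_st d, s, 1)
      else if s = hash_sym then (seek_st, s, 1) else (compare_st d, s, -1))"
  by (simp add: ss_delta_digit_state digit_delta_def state_defs)

lemma ss_delta_compare:
  "d < 10 \<Longrightarrow> ss_delta (compare_st d) s =
     (if s = digit_sym d then (matched_st d, marked_sym d, 1) else (mismatched_st d, s, 1))"
  by (simp add: ss_delta_digit_state digit_delta_def state_defs)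

lemma ss_delta_matched:
  "d < 10 \<Longrightarrow> ss_delta (matched_st d) s =
     (if s \<in> marked_syms then (matched_st d, s, 1) else (match_st d, s, 1))"
  by (simp add: ss_delta_digit_state digit_delta_def state_defs)

lemma ss_delta_mismatched:
  "d < 10 \<Longrightarrow> ss_delta (mismatched_st d) s =
     (if s \<in> marked_syms then (mismatched_st d, s, 1)
      else if s = us_sym then (match_st d, mismatch_sym, 1) else (match_st d, s, 1))"
  by (simp add: ss_delta_digit_state digit_delta_def state_defs)

definition transition_ok :: "nat \<times> nat \<times> int \<Rightarrow> bool" where
  "transition_ok r \<longleftrightarrow> fst r < 110 \<and> fst (snd r) < 28 \<and> snd (snd r) \<in> {-1, 0, 1}"

lemma transition_ok_ss_delta:
  assumes "q < 110" "s < 28"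
  shows "transition_ok (ss_delta q s)"
proof -
  consider "q < 13" | "13 \<le> q" "q < 17" | "17 \<le> q" "q < 20" | "20 \<le> q" by linarith
  then show ?thesis
  proof cases
    case 1
    then have "q \<in> {start_st, seek_st, fetch_st, close_st, rewind_st, unmark_st, forward_st, enter_st,
        final_rewind_st, final_enter_st, zero_test_st, accept_st, reject_st}"
      by (auto simp: state_defs) presburger
    then show ?thesis
      using assms
      by (elim insertE emptyE; hypsubst; simp only: ss_delta_start ss_delta_seek ss_delta_fetch
          ss_delta_close ss_delta_rewind ss_delta_unmark ss_delta_forward ss_delta_enter
          ss_delta_final_rewind ss_delta_final_enter ss_delta_zero_test ss_delta_halting insertI1 insertI2;
          auto simp: transition_ok_def state_defs sym_defs)
  next
    case 2
    then have "q = select_st (15 \<le> q) (even q)"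
      by (auto simp: select_st_def) presburger+
    then show ?thesis
      using assms ss_delta_select[of "15 \<le> q" "even q" s]
      by (auto simp: select_delta_def transition_ok_def state_defs sym_defs)
  next
    case 3
    then show ?thesis
      using assms by (simp add: ss_delta_def transition_ok_def state_defs)
  next
    case 4
    define d where "d = q mod 10"
    have "d < 10" by (simp add: d_def)
    have "q = 10 * (q div 10) + d" by (simp add: d_def)
    moreover have "q div 10 \<in> {2, 3, 4, 5, 6, 7, 8, 9, 10}" using 4 assms by auto
    ultimately have "q \<in> {to_sum_st d, subtract_st d, borrow_st d, return_st d, skip_st d,
        match_st d, compare_st d, matched_st d, mismatched_st d}"
      by (auto simp: state_defs)
    then show ?thesis
      using \<open>d < 10\<close> assms
      by (elim insertE emptyE; hypsubst; simp only: ss_delta_to_sum ss_delta_subtract ss_delta_borrow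
          ss_delta_return ss_delta_skip ss_delta_match ss_delta_compare ss_delta_matched
          ss_delta_mismatched;
          auto simp: transition_ok_def state_defs sym_defs)
  qed
qed

lemma wf_ss_verifier: "wf_tm ss_verifier"
  using transition_ok_ss_delta
  by (auto simp: wf_tm_def ss_verifier_def state_defs transition_ok_def split: prod.splits)
    (metis fst_conv snd_conv)+

lemma ss_verifier_simps [simp]:
  "tm_delta ss_verifier = ss_delta" "tm_start ss_verifier = start_st"
  "tm_accept ss_verifier = accept_st" "tm_reject ss_verifier = reject_st"
  by (simp_all add: ss_verifier_def)

lemma ss_active_states [simp]:
  "start_st \<noteq> accept_st" "seek_st \<noteq> accept_st" "fetch_st \<noteq> accept_st" "close_st \<noteq> accept_st"
  "rewind_st \<noteq> accept_st" "unmark_st \<noteq> accept_st" "forward_st \<noteq> accept_st"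
  "enter_st \<noteq> accept_st" "final_rewind_st \<noteq> accept_st" "final_enter_st \<noteq> accept_st"
  "zero_test_st \<noteq> accept_st" "select_st found fresh \<noteq> accept_st"
  "to_sum_st d \<noteq> accept_st" "subtract_st d \<noteq> accept_st" "borrow_st d \<noteq> accept_st"
  "return_st d \<noteq> accept_st" "skip_st d \<noteq> accept_st" "match_st d \<noteq> accept_st"
  "compare_st d \<noteq> accept_st" "matched_st d \<noteq> accept_st" "mismatched_st d \<noteq> accept_st"
  "start_st \<noteq> reject_st" "seek_st \<noteq> reject_st" "fetch_st \<noteq> reject_st" "close_st \<noteq> reject_st"
  "rewind_st \<noteq> reject_st" "unmark_st \<noteq> reject_st" "forward_st \<noteq> reject_st"
  "enter_st \<noteq> reject_st" "final_rewind_st \<noteq> reject_st" "final_enter_st \<noteq> reject_st"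
  "zero_test_st \<noteq> reject_st" "select_st found fresh \<noteq> reject_st"
  "to_sum_st d \<noteq> reject_st" "subtract_st d \<noteq> reject_st" "borrow_st d \<noteq> reject_st"
  "return_st d \<noteq> reject_st" "skip_st d \<noteq> reject_st" "match_st d \<noteq> reject_st"
  "compare_st d \<noteq> reject_st" "matched_st d \<noteq> reject_st" "mismatched_st d \<noteq> reject_st"
  "accept_st \<noteq> reject_st" "reject_st \<noteq> accept_st"
  by (simp_all add: state_defs)

abbreviation ss_reaches :: "nat \<Rightarrow> config \<Rightarrow> nat \<Rightarrow> config \<Rightarrow> bool" where
  "ss_reaches \<equiv> reaches ss_verifier"

section \<open>Tape contents\<close>

text \<open>A field is a number on the tape with its trailing delimiter: its digits not yet marked,
  its marked digits (always a suffix of the number), and the delimiter symbol.\<close>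

type_synonym field = "nat list \<times> nat list \<times> nat"

fun field_syms :: "field \<Rightarrow> nat list" where
  "field_syms (u, v, st) = map digit_sym u @ map marked_sym v @ [st]"

definition ss_tape :: "nat list \<Rightarrow> nat list \<Rightarrow> field list \<Rightarrow> field list \<Rightarrow> nat list" where
  "ss_tape su sv ar br = map digit_sym su @ map marked_sym sv @ [us_sym, at_sym, us_sym] @
     concat (map field_syms ar) @ [hash_sym] @ concat (map field_syms br) @ [semi_sym]"

abbreviation fresh_field :: "nat \<Rightarrow> field" where
  "fresh_field n \<equiv> (decimal_digits n, [], us_sym)"

lemma ss_input_eq_ss_tape:
  "ss_input S as bs = ss_tape (decimal_digits S) [] (map fresh_field as) (map fresh_field bs)"
  by (simp add: ss_input_def ss_tape_def enc_num_def comp_def)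

lemma length_field_syms [simp]: "length (field_syms r) = length (fst r) + length (fst (snd r)) + 1"
  by (cases r) auto

lemma field_syms_not_Nil [simp]: "field_syms r \<noteq> []"
  by (cases r) auto

lemma last_field_syms [simp]: "last (field_syms r) = snd (snd r)"
  by (cases r) auto

definition item_field :: "field \<Rightarrow> bool" where
  "item_field r \<longleftrightarrow> digit_list (fst r) \<and> digit_list (fst (snd r)) \<and>
     snd (snd r) \<in> {us_sym, mismatch_sym, used_sym}"

definition done_field :: "field \<Rightarrow> bool" where
  "done_field r \<longleftrightarrow> fst r = [] \<and> digit_list (fst (snd r)) \<and> snd (snd r) = done_sym"

definition item_syms :: "nat set" where
  "item_syms = digit_syms \<union> marked_syms \<union> {us_sym, mismatch_sym, used_sym}"

definition done_syms :: "nat set" where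
  "done_syms = marked_syms \<union> {done_sym}"

lemma set_map_digit_sym: "digit_list xs \<Longrightarrow> set (map digit_sym xs) \<subseteq> digit_syms"
  by (auto simp: digit_list_def digit_sym_def)

lemma set_map_marked_sym: "digit_list xs \<Longrightarrow> set (map marked_sym xs) \<subseteq> marked_syms"
  by (auto simp: digit_list_def marked_sym_def)

lemma us_sym_item_syms [simp]: "us_sym \<in> item_syms"
  by (simp add: item_syms_def)

lemma set_item_fields: "\<forall>r\<in>set ar. item_field r \<Longrightarrow> set (concat (map field_syms ar)) \<subseteq> item_syms"
  using set_map_digit_sym set_map_marked_sym
  by (fastforce simp: item_field_def item_syms_def split: prod.splits)

lemma set_done_fields: "\<forall>r\<in>set br. done_field r \<Longrightarrow> set (concat (map field_syms br)) \<subseteq> done_syms"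
  using set_map_marked_sym by (fastforce simp: done_field_def done_syms_def split: prod.splits)

section \<open>Matching a digit against the list\<close>

fun match_field :: "nat \<Rightarrow> field \<Rightarrow> field" where
  "match_field d (u, v, st) =
     (if u \<noteq> [] \<and> last u = d then (butlast u, d # v, st)
      else (u, v, if st = us_sym then mismatch_sym else st))"

lemma length_match_field [simp]:
  "length (fst (match_field d r)) + length (fst (snd (match_field d r))) =
   length (fst r) + length (fst (snd r))"
  by (cases r) auto

lemma length_concat_match_fields [simp]:
  "length (concat (map (field_syms \<circ> match_field d) ar)) = length (concat (map field_syms ar))"
  by (induction ar) auto

lemma item_field_match_field: "item_field r \<Longrightarrow> item_field (match_field d r)"
  by (cases r) (auto simp: item_field_def digit_list_def dest: in_set_butlastD)

lemma reaches_field_end: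
  assumes "d < 10" "digit_list v" "st \<in> {us_sym, mismatch_sym, used_sym}"
    and "q = (if mismatch then mismatched_st d else matched_st d)"
    and "T = pre @ map marked_sym v @ st # suf"
    and "T' = pre @ map marked_sym v @ (if mismatch \<and> st = us_sym then mismatch_sym else st) # suf"
    and "length T \<le> N" "h = int (length pre)" "h' = int (length pre + length v + 1)"
  shows "ss_reaches N (q, tape_of T, h) (length v + 1) (match_st d, tape_of T', h')"
proof -
  have "ss_reaches N (q, tape_of T, h) (length v) (q, tape_of T, h + int (length v))"
    by (rule reaches_sweep_right[where pre = pre and xs = "map marked_sym v" and f = id])
      (use assms in \<open>auto simp: ss_delta_matched ss_delta_mismatched digit_list_def marked_sym_def\<close>)
  moreover have "ss_reaches N (q, tape_of T, h + int (length v)) 1 (match_st d, tape_of T', h')"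
    by (rule reaches_step[where pre = "pre @ map marked_sym v" and x = st])
      (use assms in \<open>auto simp: ss_delta_matched ss_delta_mismatched sym_defs\<close>)
  ultimately show ?thesis using reaches_trans by fastforce
qed

text \<open>The comparison reads the cell left of the unmarked digits; when there are none this is the
  delimiter of the previous field (or the \<open>_\<close> after \<open>@\<close>), which is why \<open>pre\<close> must end in one.\<close>

lemma reaches_match_field:
  assumes "d < 10" "item_field (u, v, st)" "pre \<noteq> []" "last pre \<in> {us_sym, mismatch_sym, used_sym}"
    and "T = pre @ field_syms (u, v, st) @ suf" "T' = pre @ field_syms (match_field d (u, v, st)) @ suf"
    and "length T \<le> N" "h = int (length pre)" "h' = int (length pre + length u + length v + 1)"
  shows "ss_reaches N (match_st d, tape_of T, h) (length u + length v + 3) (match_st d, tape_of T', h')"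
proof -
  have u: "digit_list u" and v: "digit_list v" and st: "st \<in> {us_sym, mismatch_sym, used_sym}"
    using assms(2) by (auto simp: item_field_def)
  have to_end: "ss_reaches N (match_st d, tape_of T, h) (length u)
      (match_st d, tape_of T, h + int (length u))"
    by (rule reaches_sweep_right[where pre = pre and xs = "map digit_sym u" and f = id])
      (use assms u in \<open>auto simp: ss_delta_match digit_list_def digit_sym_def\<close>)
  obtain c rest where c: "map marked_sym v @ [st] = c # rest" "c = st \<or> c \<in> set (map marked_sym v)"
    by (cases v) auto
  have "ss_delta (match_st d) c = (compare_st d, c, -1)"
    using c(2) assms(1) v st by (auto simp: ss_delta_match digit_list_def sym_defs)
  then have step_back: "ss_reaches N (match_st d, tape_of T, h + int (length u)) 1
      (compare_st d, tape_of T, h + int (length u) - 1)"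
    by (intro reaches_step[where pre = "pre @ map digit_sym u" and suf = "rest @ suf" and x = c])
      (use assms c(1) in auto)
  have compared: "ss_reaches N (compare_st d, tape_of T, h + int (length u) - 1) (length v + 2)
      (match_st d, tape_of T', h')"
  proof (cases u rule: rev_exhaust)
    case Nil
    obtain p0 l where pl: "pre = p0 @ [l]" using assms(3) by (metis append_butlast_last_id)
    have "ss_reaches N (compare_st d, tape_of T, h - 1) 1 (mismatched_st d, tape_of T, h)"
      by (rule reaches_step[where pre = p0 and suf = "field_syms (u, v, st) @ suf" and x = l])
        (use assms pl Nil in \<open>auto simp: ss_delta_compare sym_defs\<close>)
    moreover have "ss_reaches N (mismatched_st d, tape_of T, h) (length v + 1) (match_st d, tape_of T', h')"
      by (rule reaches_field_end[where mismatch = True and pre = pre and v = v and st = st])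
        (use assms v st Nil in auto)
    ultimately show ?thesis using reaches_trans Nil by fastforce
  next
    case (snoc u0 x)
    have "x < 10" using u snoc by simp
    let ?q = "if x = d then matched_st d else mismatched_st d"
    let ?T1 = "pre @ map digit_sym u0 @ (if x = d then marked_sym x else digit_sym x) #
      map marked_sym v @ st # suf"
    have "ss_reaches N (compare_st d, tape_of T, h + int (length u) - 1) 1
        (?q, tape_of ?T1, h + int (length u))"
      by (rule reaches_step[where pre = "pre @ map digit_sym u0" and x = "digit_sym x"])
        (use assms snoc \<open>x < 10\<close> in \<open>auto simp: ss_delta_compare digit_sym_def\<close>)
    moreover have "ss_reaches N (?q, tape_of ?T1, h + int (length u)) (length v + 1)
        (match_st d, tape_of T', h')"
      by (rule reaches_field_end[where mismatch = "x \<noteq> d" and v = v and st = st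
            and pre = "pre @ map digit_sym u0 @ [if x = d then marked_sym x else digit_sym x]"])
        (use assms v st snoc in auto)
    ultimately show ?thesis using reaches_trans by fastforce
  qed
  show ?thesis using reaches_trans[OF reaches_trans[OF to_end step_back] compared] by (simp add: numeral_3_eq_3)
qed

lemma reaches_match_fields:
  assumes "d < 10" "\<forall>r\<in>set rs. item_field r"
    and "pre \<noteq> []" "last pre \<in> {us_sym, mismatch_sym, used_sym}"
    and "T = pre @ concat (map field_syms rs) @ suf"
    and "T' = pre @ concat (map field_syms (map (match_field d) rs)) @ suf"
    and "length T \<le> N" "h = int (length pre)" "h' = int (length pre + length (concat (map field_syms rs)))"
  shows "\<exists>k \<le> 3 * length (concat (map field_syms rs)).
    ss_reaches N (match_st d, tape_of T, h) k (match_st d, tape_of T', h')"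
  using assms
proof (induction rs arbitrary: pre T h)
  case Nil
  then show ?case by (auto intro: reaches_refl)
next
  case (Cons r rs)
  obtain u v st where r: "r = (u, v, st)" by (cases r)
  let ?T1 = "pre @ field_syms (match_field d r) @ concat (map field_syms rs) @ suf"
  have first: "ss_reaches N (match_st d, tape_of T, h) (length u + length v + 3)
      (match_st d, tape_of ?T1, h + int (length (field_syms r)))"
    by (rule reaches_match_field[where pre = pre and suf = "concat (map field_syms rs) @ suf"])
      (use Cons.prems r in auto)
  have "item_field (match_field d r)"
    using Cons.prems(2) item_field_match_field by simp
  then have "last (pre @ field_syms (match_field d r)) \<in> {us_sym, mismatch_sym, used_sym}"
    by (simp add: item_field_def)
  then have "\<exists>k \<le> 3 * length (concat (map field_syms rs)).
      ss_reaches N (match_st d, tape_of ?T1, h + int (length (field_syms r))) k (match_st d, tape_of T', h')"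
    by (intro Cons.IH[where pre = "pre @ field_syms (match_field d r)"]) (use Cons.prems in auto)
  then obtain k where "k \<le> 3 * length (concat (map field_syms rs))"
    "ss_reaches N (match_st d, tape_of ?T1, h + int (length (field_syms r))) k (match_st d, tape_of T', h')"
    by blast
  then show ?case
    using reaches_trans[OF first] r by (intro exI[of _ "length u + length v + 3 + k"]) auto
qed

section \<open>Selecting a fully matched list number\<close>

fun select_field :: "bool \<Rightarrow> field \<Rightarrow> bool \<times> field" where
  "select_field found (u, v, st) =
     (if st = us_sym \<and> \<not> found \<and> u = [] then (True, (u @ v, [], used_sym))
      else if st = used_sym then (found, (u @ v, [], used_sym)) else (found, (u @ v, [], us_sym)))"

fun select_fields :: "bool \<Rightarrow> field list \<Rightarrow> bool \<times> field list" where
  "select_fields found [] = (found, [])"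
| "select_fields found (r # rs) =
     (let (found', r') = select_field found r; (found'', rs') = select_fields found' rs
      in (found'', r' # rs'))"

lemma select_fields_Cons [simp]:
  "select_fields found (r # rs) =
     (fst (select_fields (fst (select_field found r)) rs),
      snd (select_field found r) # snd (select_fields (fst (select_field found r)) rs))"
  by (simp add: split_def Let_def)

declare select_fields.simps(2) [simp del]

lemma length_select_field [simp]:
  "length (fst (snd (select_field found r))) + length (fst (snd (snd (select_field found r)))) =
   length (fst r) + length (fst (snd r))"
  by (cases r) auto

lemma length_concat_select_fields [simp]:
  "length (concat (map field_syms (snd (select_fields found rs)))) = length (concat (map field_syms rs))"
  by (induction rs arbitrary: found) (auto simp del: select_field.simps)

lemma reaches_select_digits:
  assumes "digit_list u" "T = pre @ map digit_sym u @ suf" "length T \<le> N"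
    and "h = int (length pre)" "h' = int (length pre + length u)"
  shows "ss_reaches N (select_st found fresh, tape_of T, h) (length u)
           (select_st found (fresh \<and> u = []), tape_of T, h')"
  using assms
proof (induction u arbitrary: pre fresh h)
  case Nil
  then show ?case by (auto intro: reaches_refl)
next
  case (Cons x u)
  have "ss_reaches N (select_st found fresh, tape_of T, h) 1 (select_st found False, tape_of T, h + 1)"
    by (rule reaches_step[where pre = pre and x = "digit_sym x"])
      (use Cons.prems in \<open>auto simp: ss_delta_select select_delta_def digit_sym_def\<close>)
  moreover have "ss_reaches N (select_st found False, tape_of T, h + 1) (length u)
      (select_st found False, tape_of T, h')"
    using Cons.IH[where pre = "pre @ [digit_sym x]" and fresh = False] Cons.prems
    by (auto simp: algebra_simps)
  ultimately show ?case using reaches_trans by fastforce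
qed

lemma reaches_select_field:
  assumes "item_field (u, v, st)"
    and "T = pre @ field_syms (u, v, st) @ suf" "T' = pre @ field_syms (snd (select_field found (u, v, st))) @ suf"
    and "length T \<le> N" "h = int (length pre)" "h' = int (length pre + length u + length v + 1)"
  shows "ss_reaches N (select_st found True, tape_of T, h) (length u + length v + 1)
           (select_st (fst (select_field found (u, v, st))) True, tape_of T', h')"
proof -
  have u: "digit_list u" and v: "digit_list v" and st: "st \<in> {us_sym, mismatch_sym, used_sym}"
    using assms(1) by (auto simp: item_field_def)
  let ?T1 = "pre @ map digit_sym u @ map digit_sym v @ st # suf"
  have "ss_reaches N (select_st found True, tape_of T, h) (length u)
      (select_st found (u = []), tape_of T, h + int (length u))"
    using reaches_select_digits[of u T pre "map marked_sym v @ st # suf" N h "h + int (length u)" found True]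
      assms u by simp
  moreover have "ss_reaches N (select_st found (u = []), tape_of T, h + int (length u)) (length v)
      (select_st found (u = []), tape_of ?T1, h + int (length u) + int (length v))"
  proof (rule reaches_sweep_right[where pre = "pre @ map digit_sym u" and xs = "map marked_sym v"
        and f = "\<lambda>s. s - 14"])
    show "\<forall>x\<in>set (map marked_sym v). tm_delta ss_verifier (select_st found (u = [])) x =
        (select_st found (u = []), x - 14, 1)"
      using v by (auto simp: ss_delta_select select_delta_def digit_list_def marked_sym_def)
    show "?T1 = (pre @ map digit_sym u) @ map (\<lambda>s. s - 14) (map marked_sym v) @ st # suf"
      by (simp add: marked_sym_def digit_sym_def)
  qed (use assms in auto)
  moreover have "ss_reaches N (select_st found (u = []), tape_of ?T1, h + int (length u) + int (length v)) 1
      (select_st (fst (select_field found (u, v, st))) True, tape_of T', h')"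
  proof (rule reaches_step[where pre = "pre @ map digit_sym u @ map digit_sym v" and x = st])
    show "tm_delta ss_verifier (select_st found (u = [])) st =
      (select_st (fst (select_field found (u, v, st))) True, snd (snd (snd (select_field found (u, v, st)))), 1)"
      using st by (auto simp: ss_delta_select select_delta_def sym_defs)
  qed (use assms in auto)
  ultimately show ?thesis by (metis reaches_trans)
qed

lemma reaches_select_fields:
  assumes "\<forall>r\<in>set rs. item_field r"
    and "T = pre @ concat (map field_syms rs) @ suf"
    and "T' = pre @ concat (map field_syms (snd (select_fields found rs))) @ suf"
    and "length T \<le> N" "h = int (length pre)" "h' = int (length pre + length (concat (map field_syms rs)))"
  shows "ss_reaches N (select_st found True, tape_of T, h) (length (concat (map field_syms rs)))
           (select_st (fst (select_fields found rs)) True, tape_of T', h')"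
  using assms
proof (induction rs arbitrary: found pre T h)
  case Nil
  then show ?case by (auto intro: reaches_refl)
next
  case (Cons r rs)
  obtain u v st where r: "r = (u, v, st)" by (cases r)
  let ?found = "fst (select_field found r)"
  let ?T1 = "pre @ field_syms (snd (select_field found r)) @ concat (map field_syms rs) @ suf"
  have first: "ss_reaches N (select_st found True, tape_of T, h) (length u + length v + 1)
      (select_st ?found True, tape_of ?T1, h + int (length (field_syms r)))"
    unfolding r by (rule reaches_select_field[where pre = pre]) (use Cons.prems r in auto)
  have rest: "ss_reaches N (select_st ?found True, tape_of ?T1, h + int (length (field_syms r)))
      (length (concat (map field_syms rs))) (select_st (fst (select_fields ?found rs)) True, tape_of T', h')"
    by (rule Cons.IH[where pre = "pre @ field_syms (snd (select_field found r))"])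
      (use Cons.prems in auto)
  have "length (concat (map field_syms (r # rs))) = length u + length v + 1 + length (concat (map field_syms rs))"
    using r by simp
  then show ?case
    using reaches_trans[OF first rest] by (simp only: select_fields_Cons fst_conv)
qed

section \<open>Arithmetic on the target\<close>

lemma reaches_borrow_zero:
  assumes "d < 10" "digit_list xs" "decimal_value xs = 0" "length (map digit_sym xs @ suf) \<le> N"
  shows "\<exists>k \<le> length xs + 1. \<exists>c. ss_reaches N (borrow_st d, tape_of (map digit_sym xs @ suf),
    int (length xs) - 1) k c \<and> fst c = reject_st"
  using assms(2-4)
proof (induction xs arbitrary: suf rule: rev_induct)
  case Nil
  have "ss_reaches N (borrow_st d, tape_of suf, -1) 1 (reject_st, tape_of suf, -1)"
    by (rule reaches_step_left_end) (use Nil assms(1) in \<open>auto simp: ss_delta_borrow sym_defs\<close>)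
  then show ?case by auto
next
  case (snoc x xs)
  then have "x = 0" "digit_list xs" "decimal_value xs = 0" by auto
  let ?T1 = "map digit_sym xs @ digit_sym 9 # suf"
  have first: "ss_reaches N (borrow_st d, tape_of (map digit_sym (xs @ [x]) @ suf), int (length (xs @ [x])) - 1) 1
      (borrow_st d, tape_of ?T1, int (length xs) - 1)"
    by (rule reaches_step[where pre = "map digit_sym xs" and x = "digit_sym x"])
      (use snoc.prems \<open>x = 0\<close> assms(1) in \<open>auto simp: ss_delta_borrow\<close>)
  obtain k c where "k \<le> length xs + 1" "fst c = reject_st"
    and rest: "ss_reaches N (borrow_st d, tape_of ?T1, int (length xs) - 1) k c"
    using snoc.IH[of "digit_sym 9 # suf"] snoc.prems \<open>digit_list xs\<close> \<open>decimal_value xs = 0\<close> by auto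
  then show ?case
    using reaches_trans[OF first rest] by (intro exI[of _ "1 + k"] conjI exI[of _ c]) simp_all
qed

lemma reaches_borrow:
  assumes "d < 10" "digit_list xs" "decimal_value xs \<noteq> 0" "length (map digit_sym xs @ suf) \<le> N"
  shows "\<exists>ys p k. digit_list ys \<and> length ys = length xs \<and> decimal_value ys + 1 = decimal_value xs \<and>
    p \<le> length xs \<and> k \<le> length xs \<and> ss_reaches N (borrow_st d, tape_of (map digit_sym xs @ suf),
      int (length xs) - 1) k (return_st d, tape_of (map digit_sym ys @ suf), int p)"
  using assms(2-4)
proof (induction xs arbitrary: suf rule: rev_induct)
  case Nil
  then show ?case by simp
next
  case (snoc x xs)
  have "x < 10" "digit_list xs" using snoc.prems by auto
  show ?case
  proof (cases "x = 0")
    case True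
    let ?T1 = "map digit_sym xs @ digit_sym 9 # suf"
    have first: "ss_reaches N (borrow_st d, tape_of (map digit_sym (xs @ [x]) @ suf),
        int (length (xs @ [x])) - 1) 1 (borrow_st d, tape_of ?T1, int (length xs) - 1)"
      by (rule reaches_step[where pre = "map digit_sym xs" and x = "digit_sym x"])
        (use snoc.prems True assms(1) in \<open>auto simp: ss_delta_borrow\<close>)
    obtain ys p k where ys: "digit_list ys" "length ys = length xs"
      "decimal_value ys + 1 = decimal_value xs" "p \<le> length xs" "k \<le> length xs"
      and rest: "ss_reaches N (borrow_st d, tape_of ?T1, int (length xs) - 1) k
        (return_st d, tape_of (map digit_sym ys @ digit_sym 9 # suf), int p)"
      using snoc.IH[of "digit_sym 9 # suf"] snoc.prems \<open>digit_list xs\<close> True by auto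
    have "decimal_value (ys @ [9]) + 1 = decimal_value (xs @ [x])"
      using ys(3) True by simp
    then show ?thesis
      using reaches_trans[OF first rest] ys
      by (intro exI[of _ "ys @ [9]"] exI[of _ p] exI[of _ "1 + k"]) simp
  next
    case False
    have "ss_reaches N (borrow_st d, tape_of (map digit_sym (xs @ [x]) @ suf), int (length (xs @ [x])) - 1) 1
        (return_st d, tape_of (map digit_sym (xs @ [x - 1]) @ suf), int (length xs + 1))"
      by (rule reaches_step[where pre = "map digit_sym xs" and x = "digit_sym x"])
        (use snoc.prems False \<open>x < 10\<close> assms(1) in \<open>auto simp: ss_delta_borrow digit_sym_def\<close>)
    then show ?thesis
      using False \<open>x < 10\<close> \<open>digit_list xs\<close>
      by (intro exI[of _ "xs @ [x - 1]"] exI[of _ "length xs + 1"] exI[of _ 1]) simp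
  qed
qed

lemma reaches_zero_test:
  assumes "digit_list xs" "T = map digit_sym xs @ suf" "length T \<le> N" "h = int (length xs) - 1"
  shows "\<exists>k \<le> length xs + 1. \<exists>c. ss_reaches N (zero_test_st, tape_of T, h) k c \<and>
    fst c \<in> {accept_st, reject_st} \<and> (fst c = accept_st \<longleftrightarrow> decimal_value xs = 0)"
  using assms
proof (induction xs arbitrary: suf T h rule: rev_induct)
  case Nil
  have "ss_reaches N (zero_test_st, tape_of T, h) 1 (accept_st, tape_of T, -1)"
    by (rule reaches_step_left_end) (use Nil in \<open>auto simp: ss_delta_zero_test sym_defs\<close>)
  then show ?case by auto
next
  case (snoc x xs)
  have "x < 10" "digit_list xs" using snoc.prems by auto
  show ?case
  proof (cases "x = 0")
    case True
    have first: "ss_reaches N (zero_test_st, tape_of T, h) 1 (zero_test_st, tape_of T, int (length xs) - 1)"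
      by (rule reaches_step[where pre = "map digit_sym xs" and x = "digit_sym x"])
        (use snoc.prems True in \<open>auto simp: ss_delta_zero_test\<close>)
    obtain k c where "k \<le> length xs + 1" "fst c \<in> {accept_st, reject_st}"
      "fst c = accept_st \<longleftrightarrow> decimal_value xs = 0"
      and rest: "ss_reaches N (zero_test_st, tape_of T, int (length xs) - 1) k c"
      using snoc.IH[of T "digit_sym x # suf"] snoc.prems \<open>digit_list xs\<close> by auto
    then show ?thesis
      using reaches_trans[OF first rest] True by (intro exI[of _ "1 + k"] conjI exI[of _ c]) simp_all
  next
    case False
    have "ss_reaches N (zero_test_st, tape_of T, h) 1 (reject_st, tape_of T, h)"
      by (rule reaches_step[where pre = "map digit_sym xs" and x = "digit_sym x"])
        (use snoc.prems False \<open>x < 10\<close> in \<open>auto simp: ss_delta_zero_test sym_defs\<close>)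
    then show ?thesis
      using False by (intro exI[of _ 1] conjI exI[of _ "(reject_st, tape_of T, h)"]) simp_all
  qed
qed

section \<open>One digit of a certificate number\<close>

lemma reaches_rewind:
  assumes "q \<noteq> accept_st" "q \<noteq> reject_st" "\<forall>s\<in>set ys. ss_delta q s = (q, s, -1)"
    and "ss_delta q at_sym = (q', at_sym, -1)" "T = pre @ at_sym # ys @ rest" "length T \<le> N"
    and "h = int (length pre + length ys)"
  shows "ss_reaches N (q, tape_of T, h) (length ys + 1) (q', tape_of T, int (length pre) - 1)"
proof -
  have "ss_reaches N (q, tape_of T, h) (length ys) (q, tape_of T, int (length pre))"
    by (rule reaches_sweep_left[where pre = "pre @ [at_sym]" and xs = ys and f = id]) (use assms in auto)
  moreover have "ss_reaches N (q, tape_of T, int (length pre)) 1 (q', tape_of T, int (length pre) - 1)"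
    by (rule reaches_step[where pre = pre and x = at_sym]) (use assms in auto)
  ultimately show ?thesis by (rule reaches_trans)
qed

lemma reaches_return:
  assumes "d < 10" "digit_list su" "digit_list sv" "p \<le> length su + length sv"
    and "T = map digit_sym su @ map marked_sym sv @ [us_sym, at_sym, us_sym] @ rest"
    and "length T \<le> N" "h = int p"
  shows "ss_reaches N (return_st d, tape_of T, h) (length su + length sv - p + 3)
           (match_st d, tape_of T, int (length su + length sv + 3))"
proof -
  let ?X = "map digit_sym su @ map marked_sym sv @ [us_sym]"
  have T: "T = take p ?X @ drop p ?X @ at_sym # us_sym # rest"
    using assms(5) by (metis append_take_drop_id append.assoc append_Cons append_Nil)
  have "set ?X \<subseteq> digit_syms \<union> marked_syms \<union> {us_sym}"
    using set_map_digit_sym[OF assms(2)] set_map_marked_sym[OF assms(3)] by auto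
  moreover have "at_sym \<notin> digit_syms \<union> marked_syms \<union> {us_sym}"
    by (simp add: sym_defs)
  ultimately have "\<forall>s\<in>set (drop p ?X). s \<noteq> at_sym"
    by (blast dest: in_set_dropD)
  then have to_at: "ss_reaches N (return_st d, tape_of T, h) (length su + length sv + 1 - p)
      (return_st d, tape_of T, int (length su + length sv + 1))"
    by (intro reaches_sweep_right[where pre = "take p ?X" and xs = "drop p ?X" and f = id])
      (use assms T in \<open>auto simp: ss_delta_return\<close>)
  have at: "ss_reaches N (return_st d, tape_of T, int (length su + length sv + 1)) 1
      (skip_st d, tape_of T, int (length su + length sv + 2))"
    by (rule reaches_step[where pre = ?X and x = at_sym]) (use assms in \<open>auto simp: ss_delta_return\<close>)
  have skip: "ss_reaches N (skip_st d, tape_of T, int (length su + length sv + 2)) 1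
      (match_st d, tape_of T, int (length su + length sv + 3))"
    by (rule reaches_step[where pre = "?X @ [at_sym]" and x = us_sym])
      (use assms in \<open>auto simp: ss_delta_skip\<close>)
  have steps: "length su + length sv + 1 - p + 1 + 1 = length su + length sv - p + 3"
    using assms(4) by simp
  show ?thesis
    using reaches_trans[OF reaches_trans[OF to_at at] skip] unfolding steps .
qed

lemma reaches_return_match:
  assumes "d < 10" "digit_list su" "digit_list sv" "\<forall>r\<in>set ar. item_field r" "p \<le> length su + length sv"
    and "T = ss_tape su sv ar br" "length T \<le> N" "h = int p"
  shows "\<exists>k \<le> length su + length sv + 4 + 3 * length (concat (map field_syms ar)).
     ss_reaches N (return_st d, tape_of T, h) k (seek_st, tape_of (ss_tape su sv (map (match_field d) ar) br),
       int (length su + length sv + 4 + length (concat (map field_syms ar))))"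
proof -
  let ?A = "concat (map field_syms ar)"
  let ?A' = "concat (map field_syms (map (match_field d) ar))"
  let ?pre = "map digit_sym su @ map marked_sym sv @ [us_sym, at_sym, us_sym]"
  let ?suf = "hash_sym # concat (map field_syms br) @ [semi_sym]"
  have T: "T = ?pre @ ?A @ ?suf" using assms(6) by (simp add: ss_tape_def)
  have return: "ss_reaches N (return_st d, tape_of T, h) (length su + length sv - p + 3)
      (match_st d, tape_of T, int (length su + length sv + 3))"
    by (rule reaches_return[OF assms(1-3,5)]) (use T assms(7,8) in auto)
  have "\<exists>k \<le> 3 * length ?A. ss_reaches N (match_st d, tape_of T, int (length su + length sv + 3)) k
      (match_st d, tape_of (?pre @ ?A' @ ?suf), int (length ?pre + length ?A))"
    by (rule reaches_match_fields[OF assms(1,4), where pre = ?pre and suf = ?suf]) (use T assms(7) in auto)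
  then obtain k where "k \<le> 3 * length ?A" and match: "ss_reaches N
      (match_st d, tape_of T, int (length su + length sv + 3)) k
      (match_st d, tape_of (?pre @ ?A' @ ?suf), int (length ?pre + length ?A))"
    by blast
  have seek: "ss_reaches N (match_st d, tape_of (?pre @ ?A' @ ?suf), int (length ?pre + length ?A)) 1
      (seek_st, tape_of (ss_tape su sv (map (match_field d) ar) br),
       int (length su + length sv + 4 + length ?A))"
    by (rule reaches_step[where pre = "?pre @ ?A'" and x = hash_sym])
      (use assms(1,7) T in \<open>auto simp: ss_tape_def ss_delta_match sym_defs\<close>)
  show ?thesis
    using reaches_trans[OF reaches_trans[OF return match] seek] \<open>k \<le> 3 * length ?A\<close> assms(5)
    by (intro exI[of _ "length su + length sv - p + 3 + k + 1"]) simp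
qed

lemma reaches_mark_digit:
  assumes "\<forall>r\<in>set D. done_field r" "digit_list ub" "x < 10" "digit_list vb"
    and "T = ss_tape su sv ar (D @ [(ub @ [x], vb, us_sym)] @ F)"
    and "T' = ss_tape su sv ar (D @ [(ub, x # vb, us_sym)] @ F)"
    and "length T \<le> N" "h = int (length su + length sv + 4 + length (concat (map field_syms ar)))"
  shows "ss_reaches N (seek_st, tape_of T, h) (length (concat (map field_syms D)) + length ub + 2 * length vb + 3)
    (to_sum_st x, tape_of T', h + int (length (concat (map field_syms D)) + length ub) - 1)"
proof -
  let ?D = "concat (map field_syms D)"
  let ?pre = "map digit_sym su @ map marked_sym sv @ [us_sym, at_sym, us_sym] @
    concat (map field_syms ar) @ [hash_sym]"
  let ?xs = "?D @ map digit_sym ub @ digit_sym x # map marked_sym vb"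
  let ?suf = "us_sym # concat (map field_syms F) @ [semi_sym]"
  have T: "T = ?pre @ ?xs @ ?suf" "T' = ?pre @ ?D @ map digit_sym ub @ marked_sym x # map marked_sym vb @ ?suf"
    using assms(5,6) by (simp_all add: ss_tape_def)
  have "set ?xs \<subseteq> done_syms \<union> digit_syms \<union> marked_syms"
    using set_done_fields[OF assms(1)] set_map_digit_sym[OF assms(2)] set_map_marked_sym[OF assms(4)]
      assms(3) by (auto simp: done_syms_def digit_sym_def)
  then have "\<forall>s\<in>set ?xs. ss_delta seek_st s = (seek_st, s, 1)"
    by (auto simp: ss_delta_seek done_syms_def sym_defs)
  then have seek: "ss_reaches N (seek_st, tape_of T, h) (length ?xs)
      (seek_st, tape_of T, int (length ?pre + length ?xs))"
    by (intro reaches_sweep_right[where pre = ?pre and xs = ?xs and f = id]) (use T assms(7,8) in auto)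
  have turn: "ss_reaches N (seek_st, tape_of T, int (length ?pre + length ?xs)) 1
      (fetch_st, tape_of T, int (length ?pre + length ?xs) - 1)"
    by (rule reaches_step[where pre = "?pre @ ?xs" and x = us_sym])
      (use T assms(7) in \<open>auto simp: ss_delta_seek\<close>)
  have "\<forall>s\<in>set (map marked_sym vb). ss_delta fetch_st s = (fetch_st, s, -1)"
    using set_map_marked_sym[OF assms(4)] by (auto simp: ss_delta_fetch)
  then have fetch: "ss_reaches N (fetch_st, tape_of T, int (length ?pre + length ?xs) - 1) (length vb)
      (fetch_st, tape_of T, int (length (?pre @ ?D @ map digit_sym ub)))"
    by (intro reaches_sweep_left[where pre = "?pre @ ?D @ map digit_sym ub @ [digit_sym x]"
          and xs = "map marked_sym vb" and f = id])
      (use T assms(7) in auto)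
  have mark: "ss_reaches N (fetch_st, tape_of T, int (length (?pre @ ?D @ map digit_sym ub))) 1
      (to_sum_st x, tape_of T', int (length (?pre @ ?D @ map digit_sym ub)) - 1)"
    by (rule reaches_step[where pre = "?pre @ ?D @ map digit_sym ub" and x = "digit_sym x"])
      (use T assms(3,7) in \<open>auto simp: ss_delta_fetch sym_defs\<close>)
  show ?thesis
    by (rule reaches_eq[OF reaches_trans[OF reaches_trans[OF reaches_trans[OF seek turn] fetch] mark]])
      (simp_all add: assms(8))
qed

lemma reaches_fetch:
  assumes "digit_list su" "digit_list sv" "\<forall>r\<in>set ar. item_field r" "\<forall>r\<in>set D. done_field r"
    and "digit_list ub" "x < 10" "digit_list vb"
    and "T = ss_tape su sv ar (D @ [(ub @ [x], vb, us_sym)] @ F)"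
    and "T' = ss_tape su sv ar (D @ [(ub, x # vb, us_sym)] @ F)"
    and "length T \<le> N" "h = int (length su + length sv + 4 + length (concat (map field_syms ar)))"
  shows "\<exists>k \<le> 4 * length T + 3. ss_reaches N (seek_st, tape_of T, h) k
           (subtract_st x, tape_of T', int (length su) - 1)"
proof -
  let ?D = "concat (map field_syms D)"
  let ?ys = "[us_sym] @ concat (map field_syms ar) @ [hash_sym] @ ?D @ map digit_sym ub"
  let ?pre = "map digit_sym su @ map marked_sym sv @ [us_sym]"
  have length_T: "length T' = length T" "length T = length ?pre + length ?ys + length vb +
      length (concat (map field_syms F)) + 4"
    using assms(8,9) by (simp_all add: ss_tape_def)
  have mark: "ss_reaches N (seek_st, tape_of T, h) (length ?D + length ub + 2 * length vb + 3)
      (to_sum_st x, tape_of T', h + int (length ?D + length ub) - 1)"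
    by (rule reaches_mark_digit[OF assms(4-11)])
  have "set ?ys \<subseteq> item_syms \<union> done_syms \<union> digit_syms \<union> {hash_sym}"
    using set_item_fields[OF assms(3)] set_done_fields[OF assms(4)] set_map_digit_sym[OF assms(5)]
    by (auto simp: item_syms_def)
  then have "\<forall>s\<in>set ?ys. ss_delta (to_sum_st x) s = (to_sum_st x, s, -1)"
    using assms(6) by (auto simp: ss_delta_to_sum item_syms_def done_syms_def sym_defs)
  then have rewind: "ss_reaches N (to_sum_st x, tape_of T', h + int (length ?D + length ub) - 1)
      (length ?ys + 1) (subtract_st x, tape_of T', int (length ?pre) - 1)"
    by (intro reaches_rewind) (use assms(6,9,10,11) length_T in \<open>auto simp: ss_delta_to_sum ss_tape_def\<close>)
  have "\<forall>s\<in>set (map marked_sym sv @ [us_sym]). ss_delta (subtract_st x) s = (subtract_st x, s, -1)"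
    using set_map_marked_sym[OF assms(2)] assms(6) by (auto simp: ss_delta_subtract sym_defs)
  then have to_digit: "ss_reaches N (subtract_st x, tape_of T', int (length ?pre) - 1) (length sv + 1)
      (subtract_st x, tape_of T', int (length su) - 1)"
    by (intro reaches_sweep_left[where pre = "map digit_sym su" and xs = "map marked_sym sv @ [us_sym]"
          and f = id])
      (use assms(9,10) length_T in \<open>auto simp: ss_tape_def\<close>)
  show ?thesis
    using reaches_trans[OF reaches_trans[OF mark rewind] to_digit] length_T
    by (intro exI[of _ "length ?D + length ub + 2 * length vb + 3 + (length ?ys + 1) + (length sv + 1)"]) simp
qed

definition subtracted :: "nat \<Rightarrow> nat list \<Rightarrow> nat list \<Rightarrow> nat list \<Rightarrow> nat list \<Rightarrow> bool" where
  "subtracted x su sv su' sv' \<longleftrightarrow> digit_list su' \<and> digit_list sv' \<and>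
     length su' + 1 = length su \<and> length sv' = length sv + 1 \<and>
     decimal_value (su' @ sv') + x * 10 ^ length sv = decimal_value (su @ sv)"

lemma decimal_value_append_Cons:
  "decimal_value (xs @ y # ys) = decimal_value xs * 10 ^ (length ys + 1) + y * 10 ^ length ys + decimal_value ys"
  by (simp add: decimal_value_append decimal_value_Cons)

lemma reaches_subtract_with_borrow:
  assumes "y < x" "x < 10" "digit_list su" "digit_list sv"
    and "T = map digit_sym (su @ [y]) @ map marked_sym sv @ rest" "length T \<le> N"
    and "h = int (length su)"
  shows "\<exists>k \<le> length su + 2. \<exists>c. ss_reaches N (subtract_st x, tape_of T, h) k c \<and>
    ((fst c = reject_st \<and> decimal_value (su @ y # sv) < x * 10 ^ length sv) \<or>
     (\<exists>su' sv' p. c = (return_st x, tape_of (map digit_sym su' @ map marked_sym sv' @ rest), int p) \<and>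
        p \<le> length su' + length sv' \<and> subtracted x (su @ [y]) sv su' sv'))"
proof -
  let ?z = "y + 10 - x"
  let ?suf = "marked_sym ?z # map marked_sym sv @ rest"
  have first: "ss_reaches N (subtract_st x, tape_of T, h) 1
      (borrow_st x, tape_of (map digit_sym su @ ?suf), int (length su) - 1)"
    by (rule reaches_step[where pre = "map digit_sym su" and x = "digit_sym y"])
      (use assms in \<open>auto simp: ss_delta_subtract digit_sym_def\<close>)
  show ?thesis
  proof (cases "decimal_value su = 0")
    case True
    then obtain k c where "k \<le> length su + 1" "fst c = reject_st" and rest: "ss_reaches N
        (borrow_st x, tape_of (map digit_sym su @ ?suf), int (length su) - 1) k c"
      using reaches_borrow_zero[OF assms(2,3) True, of ?suf N] assms(5,6) by auto
    moreover have "decimal_value (su @ y # sv) < x * 10 ^ length sv"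
    proof -
      have "decimal_value (su @ y # sv) = y * 10 ^ length sv + decimal_value sv"
        using True by (simp add: decimal_value_append_Cons)
      also have "\<dots> < (y + 1) * 10 ^ length sv"
        using decimal_value_less[OF assms(4)] by simp
      also have "\<dots> \<le> x * 10 ^ length sv"
        using assms(1) by (intro mult_le_mono1) simp
      finally show ?thesis .
    qed
    ultimately show ?thesis
      using reaches_trans[OF first rest] by (intro exI[of _ "1 + k"] conjI exI[of _ c]) auto
  next
    case False
    then obtain ys p k where ys: "digit_list ys" "length ys = length su" "decimal_value ys + 1 = decimal_value su"
      "p \<le> length su" "k \<le> length su" and rest: "ss_reaches N
        (borrow_st x, tape_of (map digit_sym su @ ?suf), int (length su) - 1) k
        (return_st x, tape_of (map digit_sym ys @ ?suf), int p)"
      using reaches_borrow[OF assms(2,3) False, of ?suf N] assms(5,6) by auto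
    have "?z * 10 ^ length sv + x * 10 ^ length sv = (y + 10) * 10 ^ length sv"
      using assms(2) by (simp flip: add_mult_distrib)
    then have "decimal_value (ys @ ?z # sv) + x * 10 ^ length sv =
        (decimal_value ys + 1) * 10 ^ (length sv + 1) + y * 10 ^ length sv + decimal_value sv"
      by (simp add: decimal_value_append_Cons algebra_simps)
    then have "subtracted x (su @ [y]) sv ys (?z # sv)"
      using ys assms by (simp add: subtracted_def decimal_value_append_Cons flip: ys(3))
    then show ?thesis
      using reaches_trans[OF first rest] ys(2,4,5)
      by (intro exI[of _ "1 + k"] conjI exI[of _ "(return_st x, tape_of (map digit_sym ys @ ?suf), int p)"]
          disjI2 exI[of _ ys] exI[of _ "?z # sv"] exI[of _ p]) simp_all
  qed
qed

lemma reaches_subtract: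
  assumes "x < 10" "digit_list su" "digit_list sv"
    and "T = map digit_sym su @ map marked_sym sv @ rest" "length T \<le> N" "h = int (length su) - 1"
  shows "\<exists>k \<le> length su + 1. \<exists>c. ss_reaches N (subtract_st x, tape_of T, h) k c \<and>
    ((fst c = reject_st \<and> (su = [] \<or> decimal_value (su @ sv) < x * 10 ^ length sv)) \<or>
     (\<exists>su' sv' p. c = (return_st x, tape_of (map digit_sym su' @ map marked_sym sv' @ rest), int p) \<and>
        p \<le> length su' + length sv' \<and> subtracted x su sv su' sv'))"
proof (cases su rule: rev_exhaust)
  case Nil
  have "ss_reaches N (subtract_st x, tape_of T, h) 1 (reject_st, tape_of T, -1)"
    by (rule reaches_step_left_end) (use Nil assms in \<open>auto simp: ss_delta_subtract sym_defs\<close>)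
  then show ?thesis
    using Nil by (intro exI[of _ 1] conjI exI[of _ "(reject_st, tape_of T, -1)"]) simp_all
next
  case (snoc su0 y)
  have "y < 10" "digit_list su0" using assms(2) snoc by auto
  show ?thesis
  proof (cases "x \<le> y")
    case True
    let ?c = "(return_st x, tape_of (map digit_sym su0 @ map marked_sym ((y - x) # sv) @ rest),
      int (length su0 + 1))"
    have "ss_reaches N (subtract_st x, tape_of T, h) 1 ?c"
      by (rule reaches_step[where pre = "map digit_sym su0" and x = "digit_sym y"])
        (use assms snoc True \<open>y < 10\<close> in \<open>auto simp: ss_delta_subtract sym_defs\<close>)
    moreover have "(y - x) * 10 ^ length sv + x * 10 ^ length sv = y * 10 ^ length sv"
      using True by (simp flip: add_mult_distrib)
    then have "subtracted x su sv su0 ((y - x) # sv)"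
      using snoc \<open>y < 10\<close> \<open>digit_list su0\<close> assms(3)
      by (simp add: subtracted_def decimal_value_append_Cons algebra_simps)
    ultimately show ?thesis
      using snoc by (intro exI[of _ 1] conjI exI[of _ ?c] disjI2 exI[of _ su0] exI[of _ "(y - x) # sv"]
          exI[of _ "length su0 + 1"]) simp_all
  next
    case False
    then show ?thesis
      using reaches_subtract_with_borrow[of y x su0 sv T rest N h] assms snoc \<open>digit_list su0\<close>
      by fastforce
  qed
qed

lemma reaches_digit_round:
  assumes "digit_list su" "digit_list sv" "\<forall>r\<in>set ar. item_field r" "\<forall>r\<in>set D. done_field r"
    and "digit_list ub" "x < 10" "digit_list vb"
    and "T = ss_tape su sv ar (D @ [(ub @ [x], vb, us_sym)] @ F)" "length T \<le> N"
    and "h = int (length su + length sv + 4 + length (concat (map field_syms ar)))"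
  shows "\<exists>k \<le> 10 * length T. \<exists>c. ss_reaches N (seek_st, tape_of T, h) k c \<and>
    ((fst c = reject_st \<and> (su = [] \<or> decimal_value (su @ sv) < x * 10 ^ length sv)) \<or>
     (\<exists>su' sv'. c = (seek_st, tape_of (ss_tape su' sv' (map (match_field x) ar)
        (D @ [(ub, x # vb, us_sym)] @ F)), h) \<and> subtracted x su sv su' sv'))"
proof -
  let ?br = "D @ [(ub, x # vb, us_sym)] @ F"
  let ?rest = "[us_sym, at_sym, us_sym] @ concat (map field_syms ar) @ hash_sym #
    concat (map field_syms ?br) @ [semi_sym]"
  have T': "ss_tape su sv ar ?br = map digit_sym su @ map marked_sym sv @ ?rest"
    by (simp add: ss_tape_def)
  have length_T: "length (ss_tape su sv ar ?br) = length T"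
    using assms(8) by (simp add: ss_tape_def)
  obtain k1 where "k1 \<le> 4 * length T + 3"
    and fetch: "ss_reaches N (seek_st, tape_of T, h) k1 (subtract_st x, tape_of (ss_tape su sv ar ?br),
      int (length su) - 1)"
    using reaches_fetch[OF assms(1-8) refl assms(9,10)] by blast
  have "\<exists>k \<le> length su + 1. \<exists>c. ss_reaches N (subtract_st x, tape_of (ss_tape su sv ar ?br),
      int (length su) - 1) k c \<and>
    ((fst c = reject_st \<and> (su = [] \<or> decimal_value (su @ sv) < x * 10 ^ length sv)) \<or>
     (\<exists>su' sv' p. c = (return_st x, tape_of (map digit_sym su' @ map marked_sym sv' @ ?rest), int p) \<and>
        p \<le> length su' + length sv' \<and> subtracted x su sv su' sv'))"
    by (rule reaches_subtract[OF assms(6,1,2) T']) (use length_T assms(9) in auto)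
  then obtain k2 c where "k2 \<le> length su + 1"
    and subtract: "ss_reaches N (subtract_st x, tape_of (ss_tape su sv ar ?br), int (length su) - 1) k2 c"
    and result: "(fst c = reject_st \<and> (su = [] \<or> decimal_value (su @ sv) < x * 10 ^ length sv)) \<or>
     (\<exists>su' sv' p. c = (return_st x, tape_of (map digit_sym su' @ map marked_sym sv' @ ?rest), int p) \<and>
        p \<le> length su' + length sv' \<and> subtracted x su sv su' sv')"
    by blast
  have length_su: "length su + length sv + 5 \<le> length T"
    using assms(8) by (simp add: ss_tape_def)
  show ?thesis
    using result
  proof
    assume "fst c = reject_st \<and> (su = [] \<or> decimal_value (su @ sv) < x * 10 ^ length sv)"
    then show ?thesis
      using reaches_trans[OF fetch subtract] \<open>k1 \<le> _\<close> \<open>k2 \<le> _\<close> length_su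
      by (intro exI[of _ "k1 + k2"] conjI exI[of _ c]) simp_all
  next
    assume "\<exists>su' sv' p. c = (return_st x, tape_of (map digit_sym su' @ map marked_sym sv' @ ?rest), int p) \<and>
        p \<le> length su' + length sv' \<and> subtracted x su sv su' sv'"
    then obtain su' sv' p where c: "c = (return_st x, tape_of (ss_tape su' sv' ar ?br), int p)"
      and "p \<le> length su' + length sv'" and sub: "subtracted x su sv su' sv'"
      by (auto simp: ss_tape_def)
    then have lengths: "length su' + length sv' = length su + length sv" "digit_list su'" "digit_list sv'"
      by (auto simp: subtracted_def)
    obtain k3 where "k3 \<le> length su' + length sv' + 4 + 3 * length (concat (map field_syms ar))"
      and match: "ss_reaches N c k3 (seek_st, tape_of (ss_tape su' sv' (map (match_field x) ar) ?br), h)"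
      using reaches_return_match[OF assms(6) lengths(2,3) assms(3) \<open>p \<le> _\<close> refl, of ?br N "int p"]
        c lengths(1) length_T assms(9,10) by (auto simp: ss_tape_def)
    have "length (concat (map field_syms ar)) + length su + length sv + 5 \<le> length T"
      using assms(8) by (simp add: ss_tape_def)
    then have "k1 + k2 + k3 \<le> 10 * length T"
      using \<open>k1 \<le> _\<close> \<open>k2 \<le> _\<close> \<open>k3 \<le> _\<close> lengths(1) by linarith
    then show ?thesis
      using reaches_trans[OF reaches_trans[OF fetch subtract] match] sub
      by (intro exI[of _ "k1 + k2 + k3"] conjI exI) auto
  qed
qed

section \<open>End of a certificate number\<close>

lemma reaches_mark_done:
  assumes "\<forall>r\<in>set D. done_field r" "digit_list vb"
    and "T = ss_tape su sv ar (D @ [([], vb, us_sym)] @ F)"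
    and "T' = ss_tape su sv ar (D @ [([], vb, done_sym)] @ F)" "length T \<le> N"
    and "h = int (length su + length sv + 4 + length (concat (map field_syms ar)))"
  shows "ss_reaches N (seek_st, tape_of T, h) (length (concat (map field_syms D)) + 3 * length vb + 3)
    (rewind_st, tape_of T', h + int (length (concat (map field_syms D)) + length vb) - 1)"
proof -
  let ?D = "concat (map field_syms D)"
  let ?pre = "map digit_sym su @ map marked_sym sv @ [us_sym, at_sym, us_sym] @
    concat (map field_syms ar) @ [hash_sym]"
  let ?xs = "?D @ map marked_sym vb"
  let ?F = "concat (map field_syms F)"
  have T: "T = ?pre @ ?xs @ us_sym # ?F @ [semi_sym]" "T' = ?pre @ ?xs @ done_sym # ?F @ [semi_sym]"
    using assms(3,4) by (simp_all add: ss_tape_def)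
  have "set ?xs \<subseteq> done_syms"
    using set_done_fields[OF assms(1)] set_map_marked_sym[OF assms(2)] by (auto simp: done_syms_def)
  then have "\<forall>s\<in>set ?xs. ss_delta seek_st s = (seek_st, s, 1)"
    by (auto simp: ss_delta_seek done_syms_def sym_defs)
  then have seek: "ss_reaches N (seek_st, tape_of T, h) (length ?xs)
      (seek_st, tape_of T, int (length ?pre + length ?xs))"
    by (intro reaches_sweep_right[where pre = ?pre and xs = ?xs and f = id]) (use T assms(5,6) in auto)
  have turn: "ss_reaches N (seek_st, tape_of T, int (length ?pre + length ?xs)) 1
      (fetch_st, tape_of T, int (length ?pre + length ?xs) - 1)"
    by (rule reaches_step[where pre = "?pre @ ?xs" and x = us_sym])
      (use T assms(5) in \<open>auto simp: ss_delta_seek\<close>)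
  have "\<forall>s\<in>set (map marked_sym vb). ss_delta fetch_st s = (fetch_st, s, -1)"
    using set_map_marked_sym[OF assms(2)] by (auto simp: ss_delta_fetch)
  then have fetch: "ss_reaches N (fetch_st, tape_of T, int (length ?pre + length ?xs) - 1) (length vb)
      (fetch_st, tape_of T, int (length (?pre @ ?D)) - 1)"
    by (intro reaches_sweep_left[where pre = "?pre @ ?D" and xs = "map marked_sym vb" and f = id])
      (use T assms(5) in auto)
  define l where "l = last (?pre @ ?D)"
  define p0 where "p0 = butlast (?pre @ ?D)"
  have p0: "?pre @ ?D = p0 @ [l]"
    unfolding l_def p0_def by (rule append_butlast_last_id[symmetric]) simp
  have l: "l \<in> {hash_sym, done_sym}"
    unfolding l_def using assms(1) by (cases D rule: rev_exhaust) (auto simp: done_field_def)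
  have "length p0 + 1 = length (?pre @ ?D)" using arg_cong[OF p0, of length] by simp
  moreover have "T = (?pre @ ?D) @ map marked_sym vb @ us_sym # ?F @ [semi_sym]" using T by simp
  then have "T = p0 @ l # map marked_sym vb @ us_sym # ?F @ [semi_sym]" unfolding p0 by simp
  ultimately have bounce: "ss_reaches N (fetch_st, tape_of T, int (length (?pre @ ?D)) - 1) 1
      (close_st, tape_of T, int (length (?pre @ ?D)))"
    by (intro reaches_step[where pre = p0 and x = l]) (use l assms(5) in \<open>auto simp: ss_delta_fetch sym_defs\<close>)
  have "\<forall>s\<in>set (map marked_sym vb). ss_delta close_st s = (close_st, s, 1)"
    using set_map_marked_sym[OF assms(2)] by (auto simp: ss_delta_close sym_defs)
  then have close: "ss_reaches N (close_st, tape_of T, int (length (?pre @ ?D))) (length vb)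
      (close_st, tape_of T, int (length ?pre + length ?xs))"
    by (intro reaches_sweep_right[where pre = "?pre @ ?D" and xs = "map marked_sym vb" and f = id])
      (use T assms(5) in auto)
  have mark_done: "ss_reaches N (close_st, tape_of T, int (length ?pre + length ?xs)) 1
      (rewind_st, tape_of T', int (length ?pre + length ?xs) - 1)"
    by (rule reaches_step[where pre = "?pre @ ?xs" and x = us_sym]) (use T assms(5) in \<open>auto simp: ss_delta_close\<close>)
  show ?thesis
    by (rule reaches_eq[OF reaches_trans[OF reaches_trans[OF reaches_trans[OF reaches_trans[OF
        reaches_trans[OF seek turn] fetch] bounce] close] mark_done]]) (simp_all add: assms(6))
qed

lemma reaches_close:
  assumes "digit_list su" "digit_list sv" "\<forall>r\<in>set ar. item_field r" "\<forall>r\<in>set D. done_field r"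
    and "digit_list vb" "T = ss_tape su sv ar (D @ [([], vb, us_sym)] @ F)" "length T \<le> N"
    and "h = int (length su + length sv + 4 + length (concat (map field_syms ar)))"
  shows "\<exists>k \<le> 5 * length T. ss_reaches N (seek_st, tape_of T, h) k
    (unmark_st, tape_of (ss_tape su sv ar (D @ [([], vb, done_sym)] @ F)), int (length su + length sv))"
proof -
  let ?T' = "ss_tape su sv ar (D @ [([], vb, done_sym)] @ F)"
  let ?D = "concat (map field_syms D)"
  let ?ys = "[us_sym] @ concat (map field_syms ar) @ [hash_sym] @ ?D @ map marked_sym vb"
  let ?pre = "map digit_sym su @ map marked_sym sv @ [us_sym]"
  have length_T: "length ?T' = length T" "length T = length ?pre + length ?ys +
      length (concat (map field_syms F)) + 3"
    using assms(6) by (simp_all add: ss_tape_def)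
  have mark_done: "ss_reaches N (seek_st, tape_of T, h) (length ?D + 3 * length vb + 3)
      (rewind_st, tape_of ?T', h + int (length ?D + length vb) - 1)"
    by (rule reaches_mark_done[OF assms(4,5,6) refl assms(7,8)])
  have "set ?ys \<subseteq> item_syms \<union> done_syms \<union> {hash_sym}"
    using set_item_fields[OF assms(3)] set_done_fields[OF assms(4)] set_map_marked_sym[OF assms(5)]
    by (auto simp: item_syms_def done_syms_def)
  then have "\<forall>s\<in>set ?ys. ss_delta rewind_st s = (rewind_st, s, -1)"
    by (auto simp: ss_delta_rewind item_syms_def done_syms_def sym_defs)
  then have rewind: "ss_reaches N (rewind_st, tape_of ?T', h + int (length ?D + length vb) - 1)
      (length ?ys + 1) (unmark_st, tape_of ?T', int (length ?pre) - 1)"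
    by (intro reaches_rewind) (use assms(7,8) length_T in \<open>auto simp: ss_delta_rewind ss_tape_def\<close>)
  show ?thesis
    using reaches_trans[OF mark_done rewind] length_T
    by (intro exI[of _ "length ?D + 3 * length vb + 3 + (length ?ys + 1)"]) simp
qed

lemma reaches_unmark:
  assumes "digit_list su" "digit_list sv"
    and "T = map digit_sym su @ map marked_sym sv @ [us_sym, at_sym, us_sym] @ rest" "length T \<le> N"
  shows "ss_reaches N (unmark_st, tape_of T, int (length su + length sv)) (2 * (length su + length sv) + 5)
    (select_st False True, tape_of (map digit_sym (su @ sv) @ [us_sym, at_sym, us_sym] @ rest),
     int (length su + length sv + 3))"
proof -
  let ?S = "map digit_sym su @ map marked_sym sv @ [us_sym]"
  let ?S' = "map digit_sym (su @ sv) @ [us_sym]"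
  let ?T' = "?S' @ at_sym # us_sym # rest"
  let ?unmark = "\<lambda>s. if s \<in> marked_syms then s - 14 else s"
  have "\<forall>s\<in>set ?S. ss_delta unmark_st s = (unmark_st, ?unmark s, -1)"
    using set_map_digit_sym[OF assms(1)] set_map_marked_sym[OF assms(2)]
    by (auto simp: ss_delta_unmark sym_defs)
  moreover have "map ?unmark ?S = ?S'"
    using assms(1,2) by (auto simp: digit_list_def sym_defs)
  ultimately have unmark: "ss_reaches N (unmark_st, tape_of T, int (length su + length sv)) (length ?S)
      (unmark_st, tape_of ?T', -1)"
    by (intro reaches_sweep_left[where pre = "[]" and xs = ?S and f = ?unmark]) (use assms in auto)
  have turn: "ss_reaches N (unmark_st, tape_of ?T', -1) 1 (forward_st, tape_of ?T', 0)"
    by (rule reaches_step_left_end) (auto simp: ss_delta_unmark)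
  have "\<forall>s\<in>set ?S'. ss_delta forward_st s = (forward_st, s, 1)"
    using set_map_digit_sym[of "su @ sv"] assms(1,2) by (auto simp: ss_delta_forward sym_defs)
  then have forward: "ss_reaches N (forward_st, tape_of ?T', 0) (length ?S')
      (forward_st, tape_of ?T', int (length ?S'))"
    by (intro reaches_sweep_right[where pre = "[]" and xs = ?S' and f = id]) (use assms in auto)
  have at: "ss_reaches N (forward_st, tape_of ?T', int (length ?S')) 1
      (enter_st, tape_of ?T', int (length ?S') + 1)"
    by (rule reaches_step[where pre = ?S' and x = at_sym]) (use assms in \<open>auto simp: ss_delta_forward\<close>)
  have enter: "ss_reaches N (enter_st, tape_of ?T', int (length ?S') + 1) 1
      (select_st False True, tape_of ?T', int (length ?S') + 2)"
    by (rule reaches_step[where pre = "?S' @ [at_sym]" and x = us_sym])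
      (use assms in \<open>auto simp: ss_delta_enter\<close>)
  show ?thesis
    by (rule reaches_eq[OF reaches_trans[OF reaches_trans[OF reaches_trans[OF reaches_trans[OF
          unmark turn] forward] at] enter]]) simp_all
qed

lemma reaches_select:
  assumes "digit_list su" "\<forall>r\<in>set ar. item_field r"
    and "T = ss_tape su [] ar br" "length T \<le> N" "h = int (length su + 3)"
  shows "if fst (select_fields False ar)
    then ss_reaches N (select_st False True, tape_of T, h) (length (concat (map field_syms ar)) + 1)
      (seek_st, tape_of (ss_tape su [] (snd (select_fields False ar)) br), h + int (length (concat (map field_syms ar))) + 1)
    else \<exists>c. ss_reaches N (select_st False True, tape_of T, h) (length (concat (map field_syms ar)) + 1) c \<and>
      fst c = reject_st"
proof -
  let ?pre = "map digit_sym su @ [us_sym, at_sym, us_sym]"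
  let ?A' = "concat (map field_syms (snd (select_fields False ar)))"
  let ?suf = "hash_sym # concat (map field_syms br) @ [semi_sym]"
  let ?T' = "?pre @ ?A' @ ?suf"
  let ?found = "fst (select_fields False ar)"
  have select: "ss_reaches N (select_st False True, tape_of T, h) (length (concat (map field_syms ar)))
      (select_st ?found True, tape_of ?T', h + int (length (concat (map field_syms ar))))"
    by (rule reaches_select_fields[OF assms(2), where pre = ?pre and suf = ?suf])
      (use assms in \<open>auto simp: ss_tape_def\<close>)
  have hash: "ss_reaches N (select_st ?found True, tape_of ?T', h + int (length (concat (map field_syms ar)))) 1
      (if ?found then seek_st else reject_st, tape_of ?T',
       h + int (length (concat (map field_syms ar))) + (if ?found then 1 else 0))"
    by (rule reaches_step[where pre = "?pre @ ?A'" and x = hash_sym])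
      (use assms in \<open>auto simp: ss_tape_def ss_delta_select select_delta_def sym_defs\<close>)
  have "?T' = ss_tape su [] (snd (select_fields False ar)) br" by (simp add: ss_tape_def)
  then show ?thesis
    using reaches_trans[OF select hash] by (cases ?found) auto
qed

lemma reaches_number_round:
  assumes "digit_list su" "digit_list sv" "\<forall>r\<in>set ar. item_field r" "\<forall>r\<in>set D. done_field r"
    and "digit_list vb" "T = ss_tape su sv ar (D @ [([], vb, us_sym)] @ F)" "length T \<le> N"
    and "h = int (length su + length sv + 4 + length (concat (map field_syms ar)))"
  shows "\<exists>k \<le> 10 * length T. \<exists>c. ss_reaches N (seek_st, tape_of T, h) k c \<and>
    (if fst (select_fields False ar)
     then c = (seek_st, tape_of (ss_tape (su @ sv) [] (snd (select_fields False ar)) (D @ [([], vb, done_sym)] @ F)), h)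
     else fst c = reject_st)"
proof -
  let ?br = "D @ [([], vb, done_sym)] @ F"
  let ?A = "concat (map field_syms ar)"
  have length_T: "length (ss_tape su sv ar ?br) = length T" "length (ss_tape (su @ sv) [] ar ?br) = length T"
    "length su + length sv + length ?A + 5 \<le> length T"
    using assms(6) by (simp_all add: ss_tape_def)
  obtain k where "k \<le> 5 * length T" and close: "ss_reaches N (seek_st, tape_of T, h) k
      (unmark_st, tape_of (ss_tape su sv ar ?br), int (length su + length sv))"
    using reaches_close[OF assms] by blast
  have unmark: "ss_reaches N (unmark_st, tape_of (ss_tape su sv ar ?br), int (length su + length sv))
      (2 * (length su + length sv) + 5) (select_st False True, tape_of (ss_tape (su @ sv) [] ar ?br),
      int (length (su @ sv) + 3))"
    using reaches_unmark[OF assms(1,2), where T = "ss_tape su sv ar ?br" and N = N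
        and rest = "?A @ [hash_sym] @ concat (map field_syms ?br) @ [semi_sym]"] length_T assms(7)
    by (simp add: ss_tape_def)
  have select: "if fst (select_fields False ar)
    then ss_reaches N (select_st False True, tape_of (ss_tape (su @ sv) [] ar ?br), int (length (su @ sv) + 3))
      (length ?A + 1) (seek_st, tape_of (ss_tape (su @ sv) [] (snd (select_fields False ar)) ?br),
        int (length (su @ sv) + 3) + int (length ?A) + 1)
    else \<exists>c. ss_reaches N (select_st False True, tape_of (ss_tape (su @ sv) [] ar ?br),
      int (length (su @ sv) + 3)) (length ?A + 1) c \<and> fst c = reject_st"
    by (rule reaches_select) (use assms(1,2,3,7) length_T in auto)
  have steps: "k + (2 * (length su + length sv) + 5) + (length ?A + 1) \<le> 10 * length T"
    using \<open>k \<le> _\<close> length_T(3) by simp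
  show ?thesis
  proof (cases "fst (select_fields False ar)")
    case True
    let ?c = "(seek_st, tape_of (ss_tape (su @ sv) [] (snd (select_fields False ar)) ?br), h)"
    have sel: "ss_reaches N (select_st False True, tape_of (ss_tape (su @ sv) [] ar ?br),
        int (length (su @ sv) + 3)) (length ?A + 1) ?c"
      using select True assms(8) by (simp add: add.commute add.left_commute)
    show ?thesis
      using reaches_trans[OF reaches_trans[OF close unmark] sel] steps True
      by (intro exI[of _ "k + (2 * (length su + length sv) + 5) + (length ?A + 1)"] conjI exI[of _ ?c])
        simp_all
  next
    case False
    then obtain c where "fst c = reject_st" and reject: "ss_reaches N (select_st False True,
        tape_of (ss_tape (su @ sv) [] ar ?br), int (length (su @ sv) + 3)) (length ?A + 1) c"
      using select by auto
    then show ?thesis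
      using reaches_trans[OF reaches_trans[OF close unmark] reject] False steps
      by (intro exI[of _ "k + (2 * (length su + length sv) + 5) + (length ?A + 1)"] conjI exI[of _ c]) auto
  qed
qed

section \<open>Start and end of the run\<close>

lemma reaches_start:
  assumes "digit_list su" "\<forall>r\<in>set ar. item_field r" "T = ss_tape su [] ar br" "length T \<le> N"
  shows "ss_reaches N (start_st, tape_of T, 0) (length su + 4 + length (concat (map field_syms ar)))
           (seek_st, tape_of T, int (length su + 4 + length (concat (map field_syms ar))))"
proof -
  let ?xs = "map digit_sym su @ [us_sym, at_sym, us_sym] @ concat (map field_syms ar)"
  have T: "T = [] @ ?xs @ hash_sym # concat (map field_syms br) @ [semi_sym]"
    using assms(3) by (simp add: ss_tape_def)
  have "set ?xs \<subseteq> digit_syms \<union> item_syms \<union> {at_sym}"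
    using set_item_fields[OF assms(2)] set_map_digit_sym[OF assms(1)] by (auto simp: item_syms_def)
  then have "\<forall>s\<in>set ?xs. ss_delta start_st s = (start_st, s, 1)"
    by (auto simp: ss_delta_start item_syms_def sym_defs)
  then have scan: "ss_reaches N (start_st, tape_of T, 0) (length ?xs) (start_st, tape_of T, int (length ?xs))"
    by (intro reaches_sweep_right[where pre = "[]" and xs = ?xs and f = id]) (use T assms(4) in auto)
  have hash: "ss_reaches N (start_st, tape_of T, int (length ?xs)) 1 (seek_st, tape_of T, int (length ?xs) + 1)"
    by (rule reaches_step[where pre = ?xs and x = hash_sym]) (use T assms(4) in \<open>auto simp: ss_delta_start\<close>)
  show ?thesis
    by (rule reaches_eq[OF reaches_trans[OF scan hash]]) simp_all
qed

lemma reaches_final_check: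
  assumes "digit_list su" "\<forall>r\<in>set ar. item_field r" "\<forall>r\<in>set D. done_field r"
    and "T = ss_tape su [] ar D" "length T \<le> N" "h = int (length su + 4 + length (concat (map field_syms ar)))"
  shows "\<exists>k \<le> 3 * length T. \<exists>c. ss_reaches N (seek_st, tape_of T, h) k c \<and>
    fst c \<in> {accept_st, reject_st} \<and> (fst c = accept_st \<longleftrightarrow> decimal_value su = 0)"
proof -
  let ?S = "map digit_sym su"
  let ?A = "concat (map field_syms ar)"
  let ?D = "concat (map field_syms D)"
  let ?pre = "?S @ [us_sym, at_sym, us_sym] @ ?A @ [hash_sym]"
  have T: "T = ?pre @ ?D @ [semi_sym]" using assms(4) by (simp add: ss_tape_def)
  have "\<forall>s\<in>set ?D. ss_delta seek_st s = (seek_st, s, 1)"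
    using set_done_fields[OF assms(3)] by (auto simp: ss_delta_seek done_syms_def sym_defs)
  then have seek: "ss_reaches N (seek_st, tape_of T, h) (length ?D) (seek_st, tape_of T, int (length ?pre + length ?D))"
    by (intro reaches_sweep_right[where pre = ?pre and xs = ?D and f = id]) (use T assms(5,6) in auto)
  have semi: "ss_reaches N (seek_st, tape_of T, int (length ?pre + length ?D)) 1
      (final_rewind_st, tape_of T, int (length ?pre + length ?D) - 1)"
    by (rule reaches_step[where pre = "?pre @ ?D" and x = semi_sym])
      (use T assms(5) in \<open>auto simp: ss_delta_seek sym_defs\<close>)
  let ?ys = "[us_sym] @ ?A @ [hash_sym] @ ?D"
  have "set ?ys \<subseteq> item_syms \<union> done_syms \<union> {hash_sym}"
    using set_item_fields[OF assms(2)] set_done_fields[OF assms(3)] us_sym_item_syms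
    by (simp only: set_append list.set) blast
  then have "\<forall>s\<in>set ?ys. ss_delta final_rewind_st s = (final_rewind_st, s, -1)"
    by (auto simp: ss_delta_final_rewind item_syms_def done_syms_def sym_defs)
  then have rewind: "ss_reaches N (final_rewind_st, tape_of T, int (length ?pre + length ?D) - 1)
      (length ?ys + 1) (final_enter_st, tape_of T, int (length (?S @ [us_sym])) - 1)"
    by (intro reaches_rewind)
      (use T assms(5) in \<open>auto simp: ss_delta_final_rewind\<close>)
  have enter: "ss_reaches N (final_enter_st, tape_of T, int (length (?S @ [us_sym])) - 1) 1
      (zero_test_st, tape_of T, int (length su) - 1)"
    by (rule reaches_step[where pre = ?S and x = us_sym]) (use T assms(5) in \<open>auto simp: ss_delta_final_enter\<close>)
  have "\<exists>k \<le> length su + 1. \<exists>c. ss_reaches N (zero_test_st, tape_of T, int (length su) - 1) k c \<and>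
      fst c \<in> {accept_st, reject_st} \<and> (fst c = accept_st \<longleftrightarrow> decimal_value su = 0)"
    by (rule reaches_zero_test[OF assms(1)]) (use T assms(5) in auto)
  then obtain k c where "k \<le> length su + 1" "fst c \<in> {accept_st, reject_st}"
    "fst c = accept_st \<longleftrightarrow> decimal_value su = 0"
    and test: "ss_reaches N (zero_test_st, tape_of T, int (length su) - 1) k c"
    by meson
  then show ?thesis
    using reaches_trans[OF reaches_trans[OF reaches_trans[OF reaches_trans[OF seek semi] rewind] enter] test] T
    by (intro exI[of _ "length ?D + 1 + (length ?ys + 1) + 1 + k"] conjI exI[of _ c]) simp_all
qed

section \<open>The invariant of the main loop\<close>

definition field_digits :: "field \<Rightarrow> nat list" where
  "field_digits r = fst r @ fst (snd r)"

lemma length_concat_field_syms_eq: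
  "map field_digits rs = map field_digits rs' \<Longrightarrow>
   length (concat (map field_syms rs)) = length (concat (map field_syms rs'))"
proof -
  have *: "length (concat (map field_syms rs)) = sum_list (map (\<lambda>d. length d + 1) (map field_digits rs))"
    for rs :: "field list"
    by (induction rs) (auto simp: field_digits_def)
  show "map field_digits rs = map field_digits rs' \<Longrightarrow> ?thesis"
    by (simp only: *[of rs] *[of rs'])
qed

text \<open>In the invariant, the first \<open>j\<close> certificate numbers have been processed, \<open>vb\<close> are the
  processed trailing digits of the next one and \<open>ub\<close> its remaining digits, and \<open>f\<close> assigns list
  positions to the processed certificate numbers. The target is \<open>su @ sv\<close>, its last \<open>length vb\<close>
  digits \<open>sv\<close> being marked.\<close>

definition item_inv :: "nat list \<Rightarrow> nat list \<Rightarrow> (nat \<Rightarrow> nat) \<Rightarrow> nat \<Rightarrow> nat \<Rightarrow> field \<Rightarrow> bool" where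
  "item_inv as vb f j i r \<longleftrightarrow> (case r of (u, v, st) \<Rightarrow>
     u @ v = decimal_digits (as ! i) \<and> st \<in> {us_sym, mismatch_sym, used_sym} \<and>
     (st = used_sym \<longleftrightarrow> i \<in> f ` {..<j}) \<and> (st = us_sym \<longrightarrow> v = vb) \<and>
     (st = mismatch_sym \<longrightarrow> \<not> suffix vb (decimal_digits (as ! i))))"

definition verifier_inv :: "nat \<Rightarrow> nat list \<Rightarrow> nat list \<Rightarrow> nat list \<Rightarrow> nat list \<Rightarrow> field list \<Rightarrow> nat \<Rightarrow>
    nat list \<Rightarrow> nat list \<Rightarrow> (nat \<Rightarrow> nat) \<Rightarrow> bool" where
  "verifier_inv S as bs su sv ar j ub vb f \<longleftrightarrow>
     j \<le> length bs \<and> (j < length bs \<longrightarrow> ub @ vb = decimal_digits (bs ! j)) \<and>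
     (j = length bs \<longrightarrow> ub = [] \<and> vb = []) \<and>
     digit_list su \<and> digit_list sv \<and> length su + length sv = length (decimal_digits S) \<and>
     length sv = length vb \<and> decimal_value (su @ sv) + sum_list (take j bs) + decimal_value vb = S \<and>
     length ar = length as \<and> (\<forall>i < length as. item_inv as vb f j i (ar ! i)) \<and>
     inj_on f {..<j} \<and> (\<forall>i<j. f i < length as \<and> as ! f i = bs ! i)"

abbreviation done_field_of :: "nat \<Rightarrow> field" where
  "done_field_of n \<equiv> ([], decimal_digits n, done_sym)"

definition cert_fields :: "nat list \<Rightarrow> nat \<Rightarrow> nat list \<Rightarrow> nat list \<Rightarrow> field list" where
  "cert_fields bs j ub vb = map done_field_of (take j bs) @
     (if j < length bs then [(ub, vb, us_sym)] @ map fresh_field (drop (Suc j) bs) else [])"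

definition round_config :: "nat list \<Rightarrow> nat list \<Rightarrow> nat list \<Rightarrow> field list \<Rightarrow> nat \<Rightarrow> nat list \<Rightarrow>
    nat list \<Rightarrow> config" where
  "round_config bs su sv ar j ub vb = (seek_st, tape_of (ss_tape su sv ar (cert_fields bs j ub vb)),
     int (length su + length sv + 4 + length (concat (map field_syms ar))))"

lemma item_field_of_item_inv: "item_inv as vb f j i r \<Longrightarrow> item_field r"
proof (cases r)
  case (fields u v st)
  assume "item_inv as vb f j i r"
  then have digits: "u @ v = decimal_digits (as ! i)" and st: "st \<in> {us_sym, mismatch_sym, used_sym}"
    using fields by (auto simp: item_inv_def)
  have "digit_list (u @ v)" unfolding digits by simp
  then show ?thesis
    using fields st by (simp add: item_field_def)
qed

lemma item_fields_of_verifier_inv: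
  assumes "verifier_inv S as bs su sv ar j ub vb f"
  shows "\<forall>r\<in>set ar. item_field r"
proof
  fix r assume "r \<in> set ar"
  then obtain i where "i < length ar" "r = ar ! i" by (auto simp: in_set_conv_nth)
  then show "item_field r"
    using assms item_field_of_item_inv[of as vb f j i r] by (simp add: verifier_inv_def)
qed

lemma done_fields_done_field_of: "\<forall>r\<in>set (map done_field_of xs). done_field r"
  by (auto simp: done_field_def)

lemma length_tape_verifier_inv:
  assumes "verifier_inv S as bs su sv ar j ub vb f"
  shows "length (ss_tape su sv ar (cert_fields bs j ub vb)) = length (ss_input S as bs)"
proof -
  have ar_digits: "map field_digits ar = map field_digits (map fresh_field as)"
  proof (rule nth_equalityI)
    show "length (map field_digits ar) = length (map field_digits (map fresh_field as))"
      using assms by (simp add: verifier_inv_def)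
    fix i assume "i < length (map field_digits ar)"
    then have "item_inv as vb f j i (ar ! i)" "i < length as" "i < length ar"
      using assms by (auto simp: verifier_inv_def)
    then show "map field_digits ar ! i = map field_digits (map fresh_field as) ! i"
      by (simp add: item_inv_def field_digits_def split: prod.splits)
  qed
  have cert_digits: "map field_digits (cert_fields bs j ub vb) = map field_digits (map fresh_field bs)"
  proof (cases "j < length bs")
    case True
    then have "bs = take j bs @ bs ! j # drop (Suc j) bs" by (rule id_take_nth_drop)
    then have "map decimal_digits bs =
        map decimal_digits (take j bs) @ decimal_digits (bs ! j) # map decimal_digits (drop (Suc j) bs)"
      by (metis list.map(2) map_append)
    then show ?thesis
      using True assms by (simp add: cert_fields_def verifier_inv_def field_digits_def comp_def)
  next
    case False
    then show ?thesis
      using assms by (simp add: cert_fields_def verifier_inv_def field_digits_def comp_def)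
  qed
  show ?thesis
    using length_concat_field_syms_eq[OF ar_digits] length_concat_field_syms_eq[OF cert_digits] assms
    by (simp add: ss_input_eq_ss_tape ss_tape_def verifier_inv_def)
qed

definition fully_matched :: "field \<Rightarrow> bool" where
  "fully_matched r \<longleftrightarrow> snd (snd r) = us_sym \<and> fst r = []"

lemma fst_select_field: "fst (select_field found r) \<longleftrightarrow> found \<or> fully_matched r"
  by (cases r) (auto simp: fully_matched_def)

lemma snd_select_field:
  "snd (select_field found r) = (field_digits r, [],
     if snd (snd r) = used_sym \<or> (\<not> found \<and> fully_matched r) then used_sym else us_sym)"
  by (cases r) (auto simp: fully_matched_def field_digits_def)

lemma fst_select_fields: "fst (select_fields found rs) \<longleftrightarrow> found \<or> (\<exists>r\<in>set rs. fully_matched r)"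
  by (induction rs arbitrary: found) (auto simp: fst_select_field simp del: select_field.simps)

lemma length_select_fields [simp]: "length (snd (select_fields found rs)) = length rs"
  by (induction rs arbitrary: found) (auto simp del: select_field.simps)

lemma nth_select_fields:
  "i < length rs \<Longrightarrow> snd (select_fields found rs) ! i = (field_digits (rs ! i), [],
     if snd (snd (rs ! i)) = used_sym \<or> (\<not> found \<and> fully_matched (rs ! i) \<and> (\<forall>i' < i. \<not> fully_matched (rs ! i')))
     then used_sym else us_sym)"
proof (induction rs arbitrary: found i)
  case Nil
  then show ?case by simp
next
  case (Cons r rs)
  show ?case
  proof (cases i)
    case 0
    then show ?thesis by (simp add: snd_select_field del: select_field.simps)
  next
    case (Suc i')
    have "(\<forall>i'' < Suc i'. \<not> fully_matched ((r # rs) ! i'')) \<longleftrightarrow>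
        \<not> fully_matched r \<and> (\<forall>i'' < i'. \<not> fully_matched (rs ! i''))"
      by (auto simp: less_Suc_eq_0_disj)
    then show ?thesis
      using Cons Suc by (auto simp: fst_select_field simp del: select_field.simps)
  qed
qed

lemma item_inv_match_field:
  assumes "item_inv as vb f j i r"
  shows "item_inv as (x # vb) f j i (match_field x r)"
proof -
  obtain u v st where r: "r = (u, v, st)" by (cases r)
  have inv: "u @ v = decimal_digits (as ! i)" "st \<in> {us_sym, mismatch_sym, used_sym}"
    "st = used_sym \<longleftrightarrow> i \<in> f ` {..<j}" "st = us_sym \<longrightarrow> v = vb"
    "st = mismatch_sym \<longrightarrow> \<not> suffix vb (decimal_digits (as ! i))"
    using assms r by (auto simp: item_inv_def)
  show ?thesis
  proof (cases "u \<noteq> [] \<and> last u = x")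
    case True
    then have "butlast u @ [x] = u"
      using append_butlast_last_id by fastforce
    then have "butlast u @ x # v = u @ v"
      by (simp flip: append_assoc)
    then show ?thesis
      using inv r True suffix_ConsD[of x vb] by (auto simp: item_inv_def)
  next
    case False
    have "\<not> suffix (x # vb) (decimal_digits (as ! i))" if unflagged: "st = us_sym"
    proof
      assume "suffix (x # vb) (decimal_digits (as ! i))"
      then obtain zs where "u @ vb = zs @ x # vb"
        using inv(1,4) unflagged by (auto simp: suffix_def)
      then show False using False by simp
    qed
    then show ?thesis
      using inv r False suffix_ConsD[of x vb] by (auto simp: item_inv_def)
  qed
qed

lemma sum_list_take_nth_le:
  "j < length bs \<Longrightarrow> sum_list (take j bs) + bs ! j \<le> sum_list (bs :: nat list)"
proof -
  assume "j < length bs"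
  then have "sum_list (take j bs) + bs ! j = sum_list (take (Suc j) bs)"
    by (simp add: take_Suc_conv_app_nth)
  also have "\<dots> \<le> sum_list (take (Suc j) bs) + sum_list (drop (Suc j) bs)"
    by simp
  also have "\<dots> = sum_list bs"
    by (simp flip: sum_list_append)
  finally show ?thesis .
qed

text \<open>A subtraction fails only if the current certificate number exceeds what is left of the
  target: either it has more digits than the target, or the target is too small at the current
  position.\<close>

lemma subtract_failure_invalid:
  assumes inv: "verifier_inv S as bs su sv ar j (ub @ [x]) vb f" and "j < length bs"
    and failed: "su = [] \<or> decimal_value (su @ sv) < x * 10 ^ length sv"
  shows "\<not> valid_certificate S as bs"
proof -
  have digits: "ub @ x # vb = decimal_digits (bs ! j)"
    and lengths: "length su + length sv = length (decimal_digits S)" "length sv = length vb"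
    and remaining: "decimal_value (su @ sv) + sum_list (take j bs) + decimal_value vb = S"
    using inv \<open>j < length bs\<close> by (auto simp: verifier_inv_def)
  have "x * 10 ^ length vb + decimal_value vb \<le> bs ! j"
    using arg_cong[OF digits, of decimal_value] by (simp add: decimal_value_append decimal_value_Cons)
  have "S < sum_list (take j bs) + bs ! j"
    using failed
  proof
    assume "su = []"
    then have long: "length (decimal_digits S) + 1 \<le> length (decimal_digits (bs ! j))"
      using arg_cong[OF digits, of length] lengths by simp
    moreover have "length (decimal_digits S) \<noteq> 0" by simp
    ultimately have "10 ^ (length (decimal_digits (bs ! j)) - 1) \<le> bs ! j"
      by (intro power_length_decimal_digits_le) linarith
    moreover have "(10::nat) ^ length (decimal_digits S) \<le> 10 ^ (length (decimal_digits (bs ! j)) - 1)"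
      using long by (intro power_increasing) auto
    ultimately show ?thesis
      using less_power_length_decimal_digits[of S] by linarith
  next
    assume "decimal_value (su @ sv) < x * 10 ^ length sv"
    then show ?thesis
      using remaining \<open>x * 10 ^ length vb + decimal_value vb \<le> bs ! j\<close> unfolding lengths(2)
      by linarith
  qed
  then have "S < sum_list bs"
    using sum_list_take_nth_le[OF \<open>j < length bs\<close>] by linarith
  then show ?thesis by (auto simp: valid_certificate_def)
qed

text \<open>If no list number is fully matched, every list number equal to the current certificate
  number is already used by an earlier, equal certificate number; counting these shows that no
  injective assignment can exist.\<close>

lemma no_match_invalid:
  assumes inv: "verifier_inv S as bs su sv ar j [] vb f" and "j < length bs"
    and no_match: "\<not> (\<exists>r\<in>set ar. fully_matched r)"
  shows "\<not> valid_certificate S as bs"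
proof
  assume "valid_certificate S as bs"
  then obtain g where g: "inj_on g {..<length bs}" "\<forall>i<length bs. g i < length as \<and> bs ! i = as ! g i"
    by (auto simp: valid_certificate_def)
  have vb: "vb = decimal_digits (bs ! j)" and "length ar = length as"
    and items: "\<forall>i < length as. item_inv as vb f j i (ar ! i)"
    and f: "\<forall>i<j. f i < length as \<and> as ! f i = bs ! i"
    using inv \<open>j < length bs\<close> by (auto simp: verifier_inv_def)
  let ?A = "{i. i < length as \<and> as ! i = bs ! j}"
  let ?B = "{i. i < j \<and> bs ! i = bs ! j}"
  have "?A \<subseteq> f ` ?B"
  proof
    fix i assume i: "i \<in> ?A"
    obtain u v st where r: "ar ! i = (u, v, st)" by (cases "ar ! i")
    have digits: "decimal_digits (as ! i) = vb" using i vb by simp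
    have "item_inv as vb f j i (ar ! i)" using items i by simp
    then have inv_i: "u @ v = vb" "st \<in> {us_sym, mismatch_sym, used_sym}" "st = used_sym \<longleftrightarrow> i \<in> f ` {..<j}"
      "st = us_sym \<longrightarrow> v = vb" "st = mismatch_sym \<longrightarrow> \<not> suffix vb vb"
      using r digits by (auto simp: item_inv_def)
    have "\<not> fully_matched (ar ! i)" using no_match i \<open>length ar = length as\<close> by auto
    then have "st \<noteq> us_sym" using inv_i(1,4) r by (auto simp: fully_matched_def)
    then have "i \<in> f ` {..<j}" using inv_i(2,3,5) by auto
    then show "i \<in> f ` ?B" using f i by auto
  qed
  then have "card ?A \<le> card ?B"
    using card_mono[of "f ` ?B" ?A] card_image_le[of ?B f] by fastforce
  moreover have "inj_on g (insert j ?B)"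
    by (rule inj_on_subset[OF g(1)]) (use \<open>j < length bs\<close> in auto)
  moreover have "g ` insert j ?B \<subseteq> ?A"
    using g \<open>j < length bs\<close> by auto
  ultimately have "card (insert j ?B) \<le> card ?B"
    using card_inj_on_le[of g "insert j ?B" ?A] by simp
  then show False by simp
qed

definition pending_digits :: "nat list \<Rightarrow> nat \<Rightarrow> nat list" where
  "pending_digits bs j = (if j < length bs then decimal_digits (bs ! j) else [])"

lemma verifier_inv_select:
  assumes inv: "verifier_inv S as bs su sv ar j [] vb f" and "j < length bs"
    and i0: "i0 < length ar" "fully_matched (ar ! i0)" "\<forall>i < i0. \<not> fully_matched (ar ! i)"
  shows "verifier_inv S as bs (su @ sv) [] (snd (select_fields False ar)) (Suc j)
    (pending_digits bs (Suc j)) [] (f(j := i0))"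
proof -
  have vb: "vb = decimal_digits (bs ! j)" and "length ar = length as"
    and items: "\<forall>i < length as. item_inv as vb f j i (ar ! i)"
    and f: "inj_on f {..<j}" "\<forall>i<j. f i < length as \<and> as ! f i = bs ! i"
    using inv \<open>j < length bs\<close> by (auto simp: verifier_inv_def)
  have first: "fully_matched (ar ! i) \<and> (\<forall>i' < i. \<not> fully_matched (ar ! i')) \<longleftrightarrow> i = i0" for i
    using i0 not_less_iff_gr_or_eq by blast
  obtain v where r0: "ar ! i0 = ([], v, us_sym)"
    using i0(2) by (cases "ar ! i0") (auto simp: fully_matched_def)
  then have "i0 \<notin> f ` {..<j}" "decimal_digits (as ! i0) = vb"
    using items i0(1) \<open>length ar = length as\<close> by (auto simp: item_inv_def)
  then have "as ! i0 = bs ! j" using vb by simp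
  have image: "(f(j := i0)) ` {..<Suc j} = insert i0 (f ` {..<j})"
    by (auto simp: lessThan_Suc)
  have "item_inv as [] (f(j := i0)) (Suc j) i (snd (select_fields False ar) ! i)" if "i < length as" for i
  proof -
    obtain u v st where r: "ar ! i = (u, v, st)" by (cases "ar ! i")
    then have "u @ v = decimal_digits (as ! i)" "st = used_sym \<longleftrightarrow> i \<in> f ` {..<j}"
      using items that by (auto simp: item_inv_def)
    moreover have "snd (select_fields False ar) ! i = (u @ v, [], if st = used_sym \<or> i = i0 then used_sym else us_sym)"
      using nth_select_fields[of i ar False] first[of i] that r \<open>length ar = length as\<close>
      by (simp add: field_digits_def)
    ultimately show ?thesis using image by (auto simp: item_inv_def)
  qed
  moreover have "inj_on (f(j := i0)) {..<Suc j}"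
    using f(1) \<open>i0 \<notin> f ` {..<j}\<close> by (auto simp: lessThan_Suc inj_on_def)
  moreover have "\<forall>i < Suc j. (f(j := i0)) i < length as \<and> as ! (f(j := i0)) i = bs ! i"
    using f(2) i0(1) \<open>as ! i0 = bs ! j\<close> \<open>length ar = length as\<close> by (auto simp: less_Suc_eq)
  moreover have "decimal_value (su @ sv) + sum_list (take (Suc j) bs) = S"
    using inv \<open>j < length bs\<close> vb by (simp add: verifier_inv_def take_Suc_conv_app_nth)
  ultimately show ?thesis
    using inv \<open>j < length bs\<close> by (auto simp: verifier_inv_def pending_digits_def)
qed

section \<open>Correctness and running time\<close>

definition correct_verdict :: "nat \<Rightarrow> nat list \<Rightarrow> nat list \<Rightarrow> config \<Rightarrow> bool" where
  "correct_verdict S as bs c \<longleftrightarrow>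
     fst c \<in> {accept_st, reject_st} \<and> (fst c = accept_st \<longleftrightarrow> valid_certificate S as bs)"

lemma reaches_verdict:
  assumes inv: "verifier_inv S as bs su sv ar (length bs) ub vb f" and N: "N = length (ss_input S as bs)"
  shows "\<exists>k \<le> 3 * N. \<exists>c. ss_reaches N (round_config bs su sv ar (length bs) ub vb) k c \<and>
    correct_verdict S as bs c"
proof -
  have "ub = []" "vb = []" "sv = []" "digit_list su"
    and sum: "decimal_value su + sum_list bs = S"
    and f: "inj_on f {..<length bs}" "\<forall>i<length bs. f i < length as \<and> as ! f i = bs ! i"
    using inv by (auto simp: verifier_inv_def)
  have fields: "cert_fields bs (length bs) ub vb = map done_field_of bs"
    by (simp add: cert_fields_def)
  have "length (ss_tape su [] ar (map done_field_of bs)) = N"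
    using length_tape_verifier_inv[OF inv] fields N \<open>sv = []\<close> by simp
  then obtain k c where "k \<le> 3 * N" "fst c \<in> {accept_st, reject_st}"
    "fst c = accept_st \<longleftrightarrow> decimal_value su = 0"
    and run: "ss_reaches N (seek_st, tape_of (ss_tape su [] ar (map done_field_of bs)),
      int (length su + 4 + length (concat (map field_syms ar)))) k c"
    using reaches_final_check[OF \<open>digit_list su\<close> item_fields_of_verifier_inv[OF inv]
        done_fields_done_field_of refl] by (metis order.refl)
  moreover have "decimal_value su = 0 \<longleftrightarrow> valid_certificate S as bs"
    using sum f by (auto simp: valid_certificate_def)
  ultimately show ?thesis
    using fields \<open>sv = []\<close>
    by (intro exI[of _ k] conjI exI[of _ c]) (simp_all add: round_config_def correct_verdict_def)
qed

lemma reaches_next_digit: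
  assumes inv: "verifier_inv S as bs su sv ar j (ub @ [x]) vb f" and "j < length bs"
    and N: "N = length (ss_input S as bs)"
  shows "\<exists>k \<le> 10 * N. \<exists>c. ss_reaches N (round_config bs su sv ar j (ub @ [x]) vb) k c \<and>
    ((fst c = reject_st \<and> \<not> valid_certificate S as bs) \<or>
     (\<exists>su' sv'. c = round_config bs su' sv' (map (match_field x) ar) j ub (x # vb) \<and>
        verifier_inv S as bs su' sv' (map (match_field x) ar) j ub (x # vb) f))"
proof -
  let ?D = "map done_field_of (take j bs)"
  let ?F = "map fresh_field (drop (Suc j) bs)"
  have digits: "ub @ [x] @ vb = decimal_digits (bs ! j)" and "digit_list su" "digit_list sv"
    using inv \<open>j < length bs\<close> by (auto simp: verifier_inv_def)
  then have "digit_list ub" "x < 10" "digit_list vb"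
    using digit_list_decimal_digits[of "bs ! j"] by (simp_all flip: digits)
  have fields: "cert_fields bs j (ub @ [x]) vb = ?D @ [(ub @ [x], vb, us_sym)] @ ?F"
    "cert_fields bs j ub (x # vb) = ?D @ [(ub, x # vb, us_sym)] @ ?F"
    using \<open>j < length bs\<close> by (simp_all add: cert_fields_def)
  let ?T = "ss_tape su sv ar (?D @ [(ub @ [x], vb, us_sym)] @ ?F)"
  let ?h = "int (length su + length sv + 4 + length (concat (map field_syms ar)))"
  have "length ?T = N"
    using length_tape_verifier_inv[OF inv] N fields(1) by simp
  have "\<exists>k \<le> 10 * length ?T. \<exists>c. ss_reaches N (seek_st, tape_of ?T, ?h) k c \<and>
    ((fst c = reject_st \<and> (su = [] \<or> decimal_value (su @ sv) < x * 10 ^ length sv)) \<or>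
     (\<exists>su' sv'. c = (seek_st, tape_of (ss_tape su' sv' (map (match_field x) ar)
        (?D @ [(ub, x # vb, us_sym)] @ ?F)), ?h) \<and> subtracted x su sv su' sv'))"
    by (rule reaches_digit_round) (use \<open>digit_list ub\<close> \<open>x < 10\<close> \<open>digit_list vb\<close> \<open>length ?T = N\<close>
        \<open>digit_list su\<close> \<open>digit_list sv\<close> item_fields_of_verifier_inv[OF inv] in \<open>auto simp: done_field_def\<close>)
  then obtain k c where "k \<le> 10 * N" and run: "ss_reaches N (round_config bs su sv ar j (ub @ [x]) vb) k c"
    and result: "(fst c = reject_st \<and> (su = [] \<or> decimal_value (su @ sv) < x * 10 ^ length sv)) \<or>
     (\<exists>su' sv'. c = (seek_st, tape_of (ss_tape su' sv' (map (match_field x) ar) (cert_fields bs j ub (x # vb))),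
        ?h) \<and> subtracted x su sv su' sv')"
    unfolding round_config_def fields \<open>length ?T = N\<close> by blast
  show ?thesis
    using result
  proof
    assume "fst c = reject_st \<and> (su = [] \<or> decimal_value (su @ sv) < x * 10 ^ length sv)"
    then show ?thesis
      using subtract_failure_invalid[OF inv \<open>j < length bs\<close>] run \<open>k \<le> 10 * N\<close> by blast
  next
    assume "\<exists>su' sv'. c = (seek_st, tape_of (ss_tape su' sv' (map (match_field x) ar)
        (cert_fields bs j ub (x # vb))), int (length su + length sv + 4 + length (concat (map field_syms ar)))) \<and>
        subtracted x su sv su' sv'"
    then obtain su' sv' where c: "c = (seek_st, tape_of (ss_tape su' sv' (map (match_field x) ar)
        (cert_fields bs j ub (x # vb))), int (length su + length sv + 4 + length (concat (map field_syms ar))))"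
      and sub: "subtracted x su sv su' sv'" by blast
    have "verifier_inv S as bs su' sv' (map (match_field x) ar) j ub (x # vb) f"
      using inv sub \<open>j < length bs\<close> item_inv_match_field
      by (auto simp: verifier_inv_def subtracted_def decimal_value_Cons)
    moreover have "c = round_config bs su' sv' (map (match_field x) ar) j ub (x # vb)"
      using c sub by (simp add: round_config_def subtracted_def)
    ultimately show ?thesis
      using run \<open>k \<le> 10 * N\<close> by blast
  qed
qed

lemma cert_fields_next:
  assumes "j < length bs"
  shows "cert_fields bs (Suc j) (pending_digits bs (Suc j)) [] =
    map done_field_of (take j bs) @ [done_field_of (bs ! j)] @ map fresh_field (drop (Suc j) bs)"
proof (cases "Suc j < length bs")
  case True
  then have "drop (Suc j) bs = bs ! Suc j # drop (Suc (Suc j)) bs" by (simp add: Cons_nth_drop_Suc)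
  then show ?thesis using True by (simp add: cert_fields_def pending_digits_def take_Suc_conv_app_nth)
next
  case False
  then have "take j bs @ [bs ! j] = bs"
    using take_Suc_conv_app_nth[OF assms] by simp
  then have "map done_field_of bs = map done_field_of (take j bs @ [bs ! j])" by simp
  then show ?thesis using False by (simp add: cert_fields_def pending_digits_def)
qed

lemma first_fully_matched:
  assumes "\<exists>r\<in>set ar. fully_matched r"
  obtains i0 where "i0 < length ar" "fully_matched (ar ! i0)" "\<forall>i < i0. \<not> fully_matched (ar ! i)"
proof -
  obtain i where "i < length ar \<and> fully_matched (ar ! i)"
    using assms by (metis in_set_conv_nth)
  then have "\<exists>i0. (i0 < length ar \<and> fully_matched (ar ! i0)) \<and>
      (\<forall>i < i0. \<not> (i < length ar \<and> fully_matched (ar ! i)))"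
    by (rule exists_least_iff[THEN iffD1, OF exI])
  then obtain i0 where "i0 < length ar" "fully_matched (ar ! i0)"
    "\<forall>i < i0. \<not> (i < length ar \<and> fully_matched (ar ! i))"
    by blast
  then show ?thesis
    using that by (meson order.strict_trans)
qed

lemma reaches_next_number:
  assumes inv: "verifier_inv S as bs su sv ar j [] vb f" and "j < length bs"
    and N: "N = length (ss_input S as bs)"
  shows "\<exists>k \<le> 10 * N. \<exists>c. ss_reaches N (round_config bs su sv ar j [] vb) k c \<and>
    ((fst c = reject_st \<and> \<not> valid_certificate S as bs) \<or>
     (\<exists>ar' f'. c = round_config bs (su @ sv) [] ar' (Suc j) (pending_digits bs (Suc j)) [] \<and>
        verifier_inv S as bs (su @ sv) [] ar' (Suc j) (pending_digits bs (Suc j)) [] f'))"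
proof -
  let ?D = "map done_field_of (take j bs)"
  let ?F = "map fresh_field (drop (Suc j) bs)"
  let ?T = "ss_tape su sv ar (?D @ [([], vb, us_sym)] @ ?F)"
  let ?h = "int (length su + length sv + 4 + length (concat (map field_syms ar)))"
  let ?found = "fst (select_fields False ar)"
  have vb: "vb = decimal_digits (bs ! j)" and "digit_list su" "digit_list sv"
    using inv \<open>j < length bs\<close> by (auto simp: verifier_inv_def)
  have fields: "cert_fields bs j [] vb = ?D @ [([], vb, us_sym)] @ ?F"
    using \<open>j < length bs\<close> by (simp add: cert_fields_def)
  have "length ?T = N"
    using length_tape_verifier_inv[OF inv] N fields by simp
  have "\<exists>k \<le> 10 * length ?T. \<exists>c. ss_reaches N (seek_st, tape_of ?T, ?h) k c \<and>
    (if ?found then c = (seek_st, tape_of (ss_tape (su @ sv) [] (snd (select_fields False ar))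
      (?D @ [([], vb, done_sym)] @ ?F)), ?h) else fst c = reject_st)"
    by (rule reaches_number_round) (use vb \<open>length ?T = N\<close> \<open>digit_list su\<close> \<open>digit_list sv\<close>
        item_fields_of_verifier_inv[OF inv] in \<open>auto simp: done_field_def\<close>)
  then obtain k c where "k \<le> 10 * N" and run: "ss_reaches N (seek_st, tape_of ?T, ?h) k c"
    and result: "if ?found then c = (seek_st, tape_of (ss_tape (su @ sv) [] (snd (select_fields False ar))
      (?D @ [([], vb, done_sym)] @ ?F)), ?h) else fst c = reject_st"
    unfolding \<open>length ?T = N\<close> by meson
  have "round_config bs su sv ar j [] vb = (seek_st, tape_of ?T, ?h)"
    by (simp add: round_config_def fields)
  moreover have "round_config bs (su @ sv) [] (snd (select_fields False ar)) (Suc j)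
      (pending_digits bs (Suc j)) [] =
    (seek_st, tape_of (ss_tape (su @ sv) [] (snd (select_fields False ar)) (?D @ [([], vb, done_sym)] @ ?F)), ?h)"
    by (simp add: round_config_def cert_fields_next[OF \<open>j < length bs\<close>] vb)
  ultimately have run: "ss_reaches N (round_config bs su sv ar j [] vb) k c"
    and result: "if ?found then c = round_config bs (su @ sv) [] (snd (select_fields False ar)) (Suc j)
      (pending_digits bs (Suc j)) [] else fst c = reject_st"
    using run result by simp_all
  show ?thesis
  proof (cases ?found)
    case True
    then have "\<exists>r\<in>set ar. fully_matched r" by (simp add: fst_select_fields)
    then obtain i0 where "i0 < length ar" "fully_matched (ar ! i0)" "\<forall>i < i0. \<not> fully_matched (ar ! i)"
      by (rule first_fully_matched)
    then have "verifier_inv S as bs (su @ sv) [] (snd (select_fields False ar)) (Suc j)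
        (pending_digits bs (Suc j)) [] (f(j := i0))"
      by (rule verifier_inv_select[OF inv \<open>j < length bs\<close>])
    then show ?thesis
      using result True run \<open>k \<le> 10 * N\<close>
      by (intro exI[of _ k] conjI exI[of _ c] disjI2 exI[of _ "snd (select_fields False ar)"]
          exI[of _ "f(j := i0)"]) simp_all
  next
    case False
    then have "\<not> valid_certificate S as bs"
      using no_match_invalid[OF inv \<open>j < length bs\<close>] by (simp add: fst_select_fields)
    then show ?thesis
      using result False run \<open>k \<le> 10 * N\<close> by (intro exI[of _ k] conjI exI[of _ c] disjI1) simp_all
  qed
qed

definition rounds_left :: "nat list \<Rightarrow> nat \<Rightarrow> nat list \<Rightarrow> nat" where
  "rounds_left bs j ub = (if j < length bs
     then length ub + 1 + sum_list (map (\<lambda>b. length (decimal_digits b) + 1) (drop (Suc j) bs)) else 0)"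

lemma rounds_left_next_number:
  "j < length bs \<Longrightarrow> rounds_left bs (Suc j) (pending_digits bs (Suc j)) < rounds_left bs j []"
proof (cases "Suc j < length bs")
  case True
  then have "drop (Suc j) bs = bs ! Suc j # drop (Suc (Suc j)) bs" by (simp add: Cons_nth_drop_Suc)
  then show ?thesis using True by (simp add: rounds_left_def pending_digits_def)
qed (simp add: rounds_left_def pending_digits_def)

lemma reaches_then:
  assumes "reaches M N c0 k c" "k \<le> 10 * N" "m' < m"
    and "\<exists>k' \<le> 10 * N * m' + 3 * N. \<exists>c'. reaches M N c k' c' \<and> P c'"
  shows "\<exists>k \<le> 10 * N * m + 3 * N. \<exists>c'. reaches M N c0 k c' \<and> P c'"
proof -
  obtain k' c' where "k' \<le> 10 * N * m' + 3 * N" "reaches M N c k' c'" "P c'"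
    using assms(4) by blast
  moreover have "10 * N * m' + 10 * N \<le> 10 * N * m"
    using mult_le_mono2[of "m' + 1" m "10 * N"] assms(3) by simp
  ultimately show ?thesis
    using reaches_trans[OF assms(1)] assms(2) by (intro exI[of _ "k + k'"] conjI exI[of _ c']) auto
qed

lemma reaches_round:
  assumes inv: "verifier_inv S as bs su sv ar j ub vb f" and "j < length bs"
    and N: "N = length (ss_input S as bs)"
  shows "\<exists>k \<le> 10 * N. \<exists>c. ss_reaches N (round_config bs su sv ar j ub vb) k c \<and>
    ((fst c = reject_st \<and> \<not> valid_certificate S as bs) \<or>
     (\<exists>su' sv' ar' j' ub' vb' f'. c = round_config bs su' sv' ar' j' ub' vb' \<and>
        verifier_inv S as bs su' sv' ar' j' ub' vb' f' \<and> rounds_left bs j' ub' < rounds_left bs j ub))"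
proof (cases ub rule: rev_exhaust)
  case Nil
  then show ?thesis
    using reaches_next_number[OF inv[unfolded Nil] \<open>j < length bs\<close> N]
      rounds_left_next_number[OF \<open>j < length bs\<close>] by blast
next
  case (snoc ub' x)
  then have "rounds_left bs j ub' < rounds_left bs j ub"
    using \<open>j < length bs\<close> by (simp add: rounds_left_def)
  then show ?thesis
    using reaches_next_digit[OF inv[unfolded snoc] \<open>j < length bs\<close> N] snoc by blast
qed

lemma reaches_verdict_from_inv:
  assumes "verifier_inv S as bs su sv ar j ub vb f" and N: "N = length (ss_input S as bs)"
  shows "\<exists>k \<le> 10 * N * rounds_left bs j ub + 3 * N. \<exists>c.
    ss_reaches N (round_config bs su sv ar j ub vb) k c \<and> correct_verdict S as bs c"
  using assms(1)
proof (induction "rounds_left bs j ub" arbitrary: su sv ar j ub vb f rule: less_induct)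
  case less
  have "j \<le> length bs" using less.prems by (simp add: verifier_inv_def)
  show ?case
  proof (cases "j = length bs")
    case True
    obtain k c where "k \<le> 3 * N" "ss_reaches N (round_config bs su sv ar j ub vb) k c"
      "correct_verdict S as bs c"
      using reaches_verdict[OF less.prems[unfolded True] N] True by blast
    then show ?thesis
      by (intro exI[of _ k] conjI exI[of _ c]) auto
  next
    case False
    then have "j < length bs" using \<open>j \<le> length bs\<close> by simp
    then have "10 * N \<le> 10 * N * rounds_left bs j ub"
      by (simp add: rounds_left_def)
    obtain k c where "k \<le> 10 * N" and run: "ss_reaches N (round_config bs su sv ar j ub vb) k c"
      and "(fst c = reject_st \<and> \<not> valid_certificate S as bs) \<or>
        (\<exists>su' sv' ar' j' ub' vb' f'. c = round_config bs su' sv' ar' j' ub' vb' \<and>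
          verifier_inv S as bs su' sv' ar' j' ub' vb' f' \<and> rounds_left bs j' ub' < rounds_left bs j ub)"
      using reaches_round[OF less.prems \<open>j < length bs\<close> N] by blast
    then show ?thesis
    proof (elim disjE exE conjE)
      assume "fst c = reject_st" "\<not> valid_certificate S as bs"
      moreover have "k \<le> 10 * N * rounds_left bs j ub + 3 * N"
        using \<open>k \<le> 10 * N\<close> \<open>10 * N \<le> _\<close> by linarith
      ultimately show ?thesis
        using run by (intro exI[of _ k] conjI exI[of _ c]) (simp_all add: correct_verdict_def)
    next
      fix su' sv' ar' j' ub' vb' f'
      assume c: "c = round_config bs su' sv' ar' j' ub' vb'"
        and inv: "verifier_inv S as bs su' sv' ar' j' ub' vb' f'"
        and fewer: "rounds_left bs j' ub' < rounds_left bs j ub"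
      have "\<exists>k' \<le> 10 * N * rounds_left bs j' ub' + 3 * N. \<exists>c'. ss_reaches N c k' c' \<and> correct_verdict S as bs c'"
        using less.hyps[OF fewer inv] c by simp
      then show ?thesis
        using reaches_then[OF run \<open>k \<le> 10 * N\<close> fewer] by simp
    qed
  qed
qed

lemma verifier_inv_initial:
  "verifier_inv S as bs (decimal_digits S) [] (map fresh_field as) 0 (pending_digits bs 0) [] id"
  by (auto simp: verifier_inv_def item_inv_def pending_digits_def)

lemma round_config_initial:
  "round_config bs (decimal_digits S) [] (map fresh_field as) 0 (pending_digits bs 0) [] =
   (seek_st, tape_of (ss_input S as bs),
    int (length (decimal_digits S) + 4 + length (concat (map field_syms (map fresh_field as)))))"
  by (cases bs) (simp_all add: round_config_def cert_fields_def pending_digits_def ss_input_eq_ss_tape)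

lemma rounds_left_initial:
  "rounds_left bs 0 (pending_digits bs 0) = length (concat (map field_syms (map fresh_field bs)))"
proof -
  have "length (concat (map field_syms (map fresh_field xs))) = (\<Sum>b\<leftarrow>xs. length (decimal_digits b) + 1)" for xs
    by (induction xs) auto
  then show ?thesis by (cases bs) (simp_all add: rounds_left_def pending_digits_def)
qed

theorem ss_verifier_decides:
  fixes S :: nat and as bs :: "nat list"
  defines "N \<equiv> length (ss_input S as bs)"
  shows "\<exists>k \<le> 14 * N ^ 2. \<exists>c. ss_reaches N (initial_config ss_verifier (ss_input S as bs)) k c \<and>
    correct_verdict S as bs c"
proof -
  let ?ar = "map fresh_field as"
  let ?k0 = "length (decimal_digits S) + 4 + length (concat (map field_syms ?ar))"
  have tape: "ss_input S as bs = ss_tape (decimal_digits S) [] ?ar (map fresh_field bs)"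
    by (rule ss_input_eq_ss_tape)
  have start: "ss_reaches N (initial_config ss_verifier (ss_input S as bs)) ?k0
      (round_config bs (decimal_digits S) [] ?ar 0 (pending_digits bs 0) [])"
    unfolding round_config_initial initial_config_tape_of ss_verifier_simps
    by (rule reaches_start) (auto simp: tape N_def item_field_def)
  obtain k c where "k \<le> 10 * N * rounds_left bs 0 (pending_digits bs 0) + 3 * N" "correct_verdict S as bs c"
    and run: "ss_reaches N (round_config bs (decimal_digits S) [] ?ar 0 (pending_digits bs 0) []) k c"
    using reaches_verdict_from_inv[OF verifier_inv_initial N_def[THEN meta_eq_to_obj_eq]] by blast
  moreover have rounds: "rounds_left bs 0 (pending_digits bs 0) \<le> N" and "?k0 \<le> N" "1 \<le> N"
    using rounds_left_initial[of bs] by (simp_all add: N_def tape ss_tape_def)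
  then have "?k0 + (10 * N * rounds_left bs 0 (pending_digits bs 0) + 3 * N) \<le> 14 * N ^ 2"
    using mult_le_mono2[OF rounds, of "10 * N"] le_square[of N] unfolding power2_eq_square by linarith
  ultimately show ?thesis
    using reaches_trans[OF start run] by (intro exI[of _ "?k0 + k"] conjI exI[of _ c]) simp_all
qed

theorem mainTheorem4:
  shows "\<exists>M :: tm. wf_tm M \<and>
    (\<exists>c :: nat. \<forall>S as bs.
       let w = ss_input S as bs; n = length w in
       \<exists>t. halts_at M w t \<and> t \<le> c * n ^ 2 \<and> space_used M w t \<le> c * n \<and>
           (fst (tm_run M w t) = tm_accept M \<longleftrightarrow> valid_certificate S as bs))"
proof (intro exI[of _ ss_verifier] exI[of _ 14] conjI allI)
  show "wf_tm ss_verifier" by (rule wf_ss_verifier)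
  fix S as bs
  let ?w = "ss_input S as bs"
  obtain k c where "k \<le> 14 * length ?w ^ 2" "correct_verdict S as bs c"
    and run: "ss_reaches (length ?w) (initial_config ss_verifier ?w) k c"
    using ss_verifier_decides by blast
  moreover from this have "halted ss_verifier c"
    by (auto simp: correct_verdict_def halted_def)
  ultimately obtain t where "halts_at ss_verifier ?w t" "t \<le> k" "tm_run ss_verifier ?w t = c"
    "space_used ss_verifier ?w t \<le> length ?w + 2"
    using halts_at_of_reaches[OF run] by blast
  moreover have "1 \<le> length ?w" by (simp add: ss_input_def)
  ultimately show "let w = ?w; n = length w in \<exists>t. halts_at ss_verifier w t \<and> t \<le> 14 * n ^ 2 \<and>
      space_used ss_verifier w t \<le> 14 * n \<and>
      (fst (tm_run ss_verifier w t) = tm_accept ss_verifier \<longleftrightarrow> valid_certificate S as bs)"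
    unfolding Let_def using \<open>k \<le> _\<close> \<open>correct_verdict S as bs c\<close>
    by (intro exI[of _ t] conjI) (auto simp: correct_verdict_def)
qed

end
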